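(* Let $\Lambda,\mu,\beta,\rho,\phi,\alpha,\omega>0$, $\psi\ge 0$, $0<\eta_C\le1$, $\eta_A\ge 1$, and set $\beta_1=\beta\mu/\Lambda$, $\xi_1=\alpha+\mu$, $\xi_2=\omega+\mu$, $\xi_3=\rho+\phi+\mu$. Consider the system \begin{align*} \dot S&=\Lambda-\beta_1(I+\eta_C C+\eta_A A)S-(\mu+\psi)S,\\ \dot I&=\beta_1(I+\eta_C C+\eta_A A)S-\xi_3 I+\alpha A+\omega C,\\ \dot C&=\phi I-\xi_2 C,\\ \dot A&=\rho I-\xi_1 A,\\ \dot E&=\psi S-\mu E, \end{align*} on the region $\Omega_P=\{(S,I,C,A,E)\in\mathbb{R}_{\ge0}^5: S\le \Lambda/(\psi+\mu),\ E\le \psi\Lambda/(\mu(\psi+\mu)),\ S+I+C+A+E\le\Lambda/\mu\}$, and let $\Omega_{P0}=\{(S,I,C,A,E)\in\Omega_P: I=C=A=0\}$. Define $$R_0=\frac{\Lambda\,\beta_1\bigl(\xi_2(\xi_1+\rho\eta_A)+\eta_C\phi\xi_1\bigr)}{(\mu+\psi)\,\mu\bigl(\xi_2(\rho+\xi_1)+\phi\xi_1\bigr)}.$$ If $R_0>1$, then the unique endemic equilibrium $\tilde\Sigma_+=(\tilde S,\tilde I,\tilde C,\tilde A,\tilde E)$ of this system (the unique equilibrium with $\tilde I,\tilde C,\tilde A>0$), whose first and last components are $$\tilde S=\frac{\mu(\xi_1(\phi+\xi_2)+\rho\xi_2)}{\beta_1(\xi_1(\xi_2+\eta_C\phi)+\eta_A\rho\xi_2)},\qquad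 \tilde E=\frac{\psi\,\tilde S}{\mu},$$ is globally asymptotically stable in $\Omega_P\setminus\Omega_{P0}$.
   Context: This is the limiting (mass-action) form of an HIV/AIDS model with pre-exposure prophylaxis (PrEP), in the case of zero AIDS-induced death rate and no abandonment of PrEP: $S$ susceptible, $I$ pre-AIDS HIV-infected, $C$ HIV-infected under antiretroviral treatment, $A$ with AIDS symptoms, $E$ susceptible individuals under PrEP; $\psi$ is the rate at which susceptibles start PrEP. $R_0$ is the basic reproduction number of this system. *)

theory Defs
  imports "HOL-Analysis.Analysis"
begin

type_synonym state5 = "real \<times> real \<times> real \<times> real \<times> real"
  \<comment> \<open>(S, I, C, A, E)\<close>

text \<open>Right-hand side of the PrEP model (limiting mass-action form, no AIDS death,
  no PrEP abandonment). Parameters: Lam mu beta rho phi alpha omega psi etaC etaA.\<close>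
definition hiv_rhs ::
  "real \<Rightarrow> real \<Rightarrow> real \<Rightarrow> real \<Rightarrow> real \<Rightarrow> real \<Rightarrow> real \<Rightarrow> real \<Rightarrow> real \<Rightarrow> real
   \<Rightarrow> state5 \<Rightarrow> state5" where
  "hiv_rhs Lam mu beta rho phi alpha omega psi etaC etaA =
     (\<lambda>(S, I, C, A, E).
        let beta1 = beta * mu / Lam; xi1 = alpha + mu; xi2 = omega + mu; xi3 = rho + phi + mu
        in ( Lam - beta1 * (I + etaC * C + etaA * A) * S - (mu + psi) * S,
             beta1 * (I + etaC * C + etaA * A) * S - xi3 * I + alpha * A + omega * C,
             phi * I - xi2 * C,
             rho * I - xi1 * A,
             psi * S - mu * E))"

definition OmegaP :: "real \<Rightarrow> real \<Rightarrow> real \<Rightarrow> state5 set" where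
  "OmegaP Lam mu psi = {(S, I, C, A, E). S \<ge> 0 \<and> I \<ge> 0 \<and> C \<ge> 0 \<and> A \<ge> 0 \<and> E \<ge> 0 \<and>
      S \<le> Lam / (psi + mu) \<and> E \<le> psi * Lam / (mu * (psi + mu)) \<and>
      S + I + C + A + E \<le> Lam / mu}"

definition OmegaP0 :: "real \<Rightarrow> real \<Rightarrow> real \<Rightarrow> state5 set" where
  "OmegaP0 Lam mu psi = {(S, I, C, A, E). (S, I, C, A, E) \<in> OmegaP Lam mu psi \<and> I = 0 \<and> C = 0 \<and> A = 0}"

definition is_solution :: "(state5 \<Rightarrow> state5) \<Rightarrow> (real \<Rightarrow> state5) \<Rightarrow> bool" where
  "is_solution F x \<longleftrightarrow> (\<forall>t\<ge>0. (x has_vector_derivative F (x t)) (at t within {0..}))"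

definition gas_in :: "(state5 \<Rightarrow> state5) \<Rightarrow> state5 \<Rightarrow> state5 set \<Rightarrow> bool" where
  "gas_in F p D \<longleftrightarrow>
     F p = 0 \<and>
     (\<forall>\<epsilon>>0. \<exists>\<delta>>0. \<forall>x. is_solution F x \<and> x 0 \<in> D \<and> dist (x 0) p < \<delta>
          \<longrightarrow> (\<forall>t\<ge>0. dist (x t) p < \<epsilon>)) \<and>
     (\<forall>x. is_solution F x \<and> x 0 \<in> D \<longrightarrow> (x \<longlongrightarrow> p) at_top)"

definition R0 ::
  "real \<Rightarrow> real \<Rightarrow> real \<Rightarrow> real \<Rightarrow> real \<Rightarrow> real \<Rightarrow> real \<Rightarrow> real \<Rightarrow> real \<Rightarrow> real \<Rightarrow> real" where
  "R0 Lam mu beta rho phi alpha omega psi etaC etaA =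
     (let beta1 = beta * mu / Lam; xi1 = alpha + mu; xi2 = omega + mu
      in Lam * beta1 * (xi2 * (xi1 + rho * etaA) + etaC * phi * xi1)
         / ((mu + psi) * mu * (xi2 * (rho + xi1) + phi * xi1)))"

end

theory Submission
  imports Defs
begin

(*
  The endemic equilibrium is explicit, and R0 > 1 is exactly the condition that its infected
  components are positive.

  The region Omega_P is forward invariant: nonnegativity follows from Gronwall estimates for the
  squared negative parts of the components, and the total population N satisfies N' = Lam - mu N.
  If some infected class is initially populated, all of S, I, C, A become positive immediately.

  Writing S~, I~, ... for the equilibrium, the Goh-Volterra function
    V = sum of w_X (X - X~ ln X) over X = S, I, C, A, plus kE (E - E~)^2
  satisfies V' <= - kappa ((S - S~)^2 + (E - E~)^2 + (C I~ - C~ I)^2 + (A I~ - A~ I)^2) along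
  positive solutions, the remaining cross terms being nonpositive by the AM-GM inequality. As V
  is bounded below and the right-hand side has a bounded derivative, Barbalat's lemma makes it
  tend to 0; hence S -> S~, E -> E~, and C, A become proportional to I. A second application of
  Barbalat's lemma, to S', identifies the limit of the force of infection and therefore of I, C
  and A. Lyapunov stability comes from quadratic upper and lower bounds on V - V~ near the
  equilibrium.
*)

section \<open>Calculus on the half-line\<close>

lemma has_vector_derivative_fst:
  "(x has_vector_derivative v) F \<Longrightarrow> ((\<lambda>t. fst (x t)) has_vector_derivative fst v) F"
  unfolding has_vector_derivative_def by (drule has_derivative_fst) simp

lemma has_vector_derivative_snd:
  "(x has_vector_derivative v) F \<Longrightarrow> ((\<lambda>t. snd (x t)) has_vector_derivative snd v) F"
  unfolding has_vector_derivative_def by (drule has_derivative_snd) simp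

lemma has_real_derivative_at_of_within_atLeast:
  assumes "(f has_real_derivative f') (at t within {a..})" "a < t"
  shows "(f has_real_derivative f') (at t)"
proof -
  have "t \<in> interior {a..}" using assms(2) by (simp add: interior_real_atLeast)
  then have "at t within {a..} = at t" by (rule at_within_interior)
  with assms(1) show ?thesis by simp
qed

lemma continuous_on_atLeast_of_deriv_within:
  assumes "\<And>t. a \<le> t \<Longrightarrow> (f has_real_derivative f' t) (at t within {a..})"
  shows "continuous_on {a..} f"
  unfolding continuous_on_eq_continuous_within using assms by (auto intro: DERIV_continuous)

lemma DERIV_neg_part_sq: "DERIV (\<lambda>v::real. (min v 0)^2) v :> 2 * min v 0"
proof (cases "v < 0")
  case True
  have "DERIV (\<lambda>v::real. v^2) v :> 2 * min v 0" using True by (auto intro!: derivative_eq_intros)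
  then show ?thesis
    by (rule has_field_derivative_transform_within_open[where S="{..<0}"]) (use True in auto)
next
  case False
  show ?thesis
  proof (cases "v > 0")
    case True
    have "DERIV (\<lambda>v::real. 0) v :> 2 * min v 0" using True by (auto intro!: derivative_eq_intros)
    then show ?thesis
      by (rule has_field_derivative_transform_within_open[where S="{0<..}"]) (use True in auto)
  next
    case False
    with \<open>\<not> v < 0\<close> have v: "v = 0" by auto
    have "DERIV (\<lambda>v::real. (min v 0)^2) 0 :> 0"
      unfolding CARAT_DERIV
    proof (rule exI[where x="\<lambda>z. min z 0"], intro conjI allI)
      show "isCont (\<lambda>z::real. min z 0) 0" by (intro continuous_intros)
    qed (auto simp: power2_eq_square min_def)
    then show ?thesis using v by simp
  qed
qed

lemma DERIV_volterra_term:
  assumes "(f has_real_derivative f') (at t)" "0 < f t"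
  shows "((\<lambda>t. f t - c * ln (f t)) has_real_derivative (1 - c / f t) * f') (at t)"
proof -
  have "((\<lambda>t. f t - c * ln (f t)) has_real_derivative f' - c * (f' * inverse (f t))) (at t)"
    using assms by (auto intro!: derivative_eq_intros simp: divide_inverse mult_ac)
  moreover have "f' - c * (f' * inverse (f t)) = (1 - c / f t) * f'"
    by (simp add: divide_inverse algebra_simps)
  ultimately show ?thesis by simp
qed

lemma DERIV_exp_weighted:
  assumes "(f has_real_derivative f') (at s)"
  shows "((\<lambda>s. f s * exp (c * s)) has_real_derivative exp (c * s) * (f' + c * f s)) (at s)"
proof -
  have "((\<lambda>s. f s * exp (c * s)) has_real_derivative f' * exp (c * s) + f s * (exp (c * s) * c)) (at s)"
    by (auto intro!: derivative_eq_intros assms)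
  then show ?thesis by (simp add: algebra_simps)
qed

lemma gronwall_zero:
  fixes q q' :: "real \<Rightarrow> real"
  assumes cont: "continuous_on {0..b} q"
    and der: "\<And>t. 0 < t \<Longrightarrow> t < b \<Longrightarrow> (q has_real_derivative q' t) (at t)"
    and le: "\<And>t. 0 < t \<Longrightarrow> t < b \<Longrightarrow> q' t \<le> K * q t"
    and q0: "q 0 = 0" and nonneg: "0 \<le> q b" and "0 \<le> b"
  shows "q b = 0"
proof -
  have "q b * exp (- K * b) \<le> q 0 * exp (- K * 0)"
  proof (rule DERIV_nonpos_imp_decreasing_open[OF \<open>0 \<le> b\<close>])
    fix s assume s: "0 < s" "s < b"
    have "exp (- K * s) * (q' s + - K * q s) \<le> 0"
      using le[OF s] by (simp add: mult_nonneg_nonpos)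
    then show "\<exists>y. ((\<lambda>s. q s * exp (- K * s)) has_real_derivative y) (at s) \<and> y \<le> 0"
      using DERIV_exp_weighted[OF der[OF s], of "- K"] by blast
  qed (use cont in \<open>intro continuous_intros\<close>)
  then have "q b \<le> 0" using q0 by (simp add: mult_le_0_iff)
  with nonneg show ?thesis by simp
qed

lemma exp_weighted_mono:
  fixes f f' :: "real \<Rightarrow> real"
  assumes cont: "continuous_on {0..} f"
    and der: "\<And>s. 0 < s \<Longrightarrow> (f has_real_derivative f' s) (at s)"
    and ge: "\<And>s. 0 < s \<Longrightarrow> 0 \<le> f' s + c * f s"
    and "0 \<le> a" "a \<le> b"
  shows "f a * exp (c * a) \<le> f b * exp (c * b)"
proof (rule DERIV_nonneg_imp_increasing_open[OF \<open>a \<le> b\<close>])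
  fix s assume "a < s" "s < b"
  then have s: "0 < s" using \<open>0 \<le> a\<close> by simp
  show "\<exists>y. ((\<lambda>s. f s * exp (c * s)) has_real_derivative y) (at s) \<and> 0 \<le> y"
    using DERIV_exp_weighted[OF der[OF s], of c] ge[OF s] by auto
next
  show "continuous_on {a..b} (\<lambda>s. f s * exp (c * s))"
    using cont \<open>0 \<le> a\<close> by (auto intro!: continuous_intros elim: continuous_on_subset)
qed

lemma exp_weighted_strict_mono:
  fixes f f' :: "real \<Rightarrow> real"
  assumes cont: "continuous_on {0..} f"
    and der: "\<And>s. 0 < s \<Longrightarrow> (f has_real_derivative f' s) (at s)"
    and gt: "\<And>s. 0 < s \<Longrightarrow> 0 < f' s + c * f s"
    and "0 \<le> a" "a < b"
  shows "f a * exp (c * a) < f b * exp (c * b)"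
proof (rule DERIV_pos_imp_increasing_open[OF \<open>a < b\<close>])
  fix s assume "a < s" "s < b"
  then have s: "0 < s" using \<open>0 \<le> a\<close> by simp
  show "\<exists>y. ((\<lambda>s. f s * exp (c * s)) has_real_derivative y) (at s) \<and> 0 < y"
    using DERIV_exp_weighted[OF der[OF s], of c] gt[OF s] by auto
next
  show "continuous_on {a..b} (\<lambda>s. f s * exp (c * s))"
    using cont \<open>0 \<le> a\<close> by (auto intro!: continuous_intros elim: continuous_on_subset)
qed

lemma nonneg_of_deriv_ge_linear:
  fixes f f' :: "real \<Rightarrow> real"
  assumes "continuous_on {0..} f"
    and "\<And>s. 0 < s \<Longrightarrow> (f has_real_derivative f' s) (at s)"
    and "\<And>s. 0 < s \<Longrightarrow> 0 \<le> f' s + c * f s"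
    and "0 \<le> f 0" "0 \<le> t"
  shows "0 \<le> f t"
proof -
  have "0 \<le> f t * exp (c * t)" using exp_weighted_mono[OF assms(1-3), of 0 t] assms(4,5) by simp
  then show ?thesis by (simp add: zero_le_mult_iff)
qed

lemma pos_of_deriv_ge_linear:
  fixes f f' :: "real \<Rightarrow> real"
  assumes "continuous_on {0..} f"
    and "\<And>s. 0 < s \<Longrightarrow> (f has_real_derivative f' s) (at s)"
    and "\<And>s. 0 < s \<Longrightarrow> 0 \<le> f' s + c * f s"
    and "0 < f 0" "0 \<le> t"
  shows "0 < f t"
proof -
  have "0 < f t * exp (c * t)" using exp_weighted_mono[OF assms(1-3), of 0 t] assms(4,5) by simp
  then show ?thesis by (simp add: zero_less_mult_iff)
qed

lemma pos_of_deriv_gt_linear: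
  fixes f f' :: "real \<Rightarrow> real"
  assumes "continuous_on {0..} f"
    and "\<And>s. 0 < s \<Longrightarrow> (f has_real_derivative f' s) (at s)"
    and "\<And>s. 0 < s \<Longrightarrow> 0 < f' s + c * f s"
    and "0 \<le> f 0" "0 < t"
  shows "0 < f t"
proof -
  have "0 < f t * exp (c * t)" using exp_weighted_strict_mono[OF assms(1-3), of 0 t] assms(4,5) by simp
  then show ?thesis by (simp add: zero_less_mult_iff)
qed

lemma le_affine_of_deriv_le:
  fixes g g' :: "real \<Rightarrow> real"
  assumes "\<And>s. a \<le> s \<Longrightarrow> s \<le> b \<Longrightarrow> (g has_real_derivative g' s) (at s)"
    and "\<And>s. a \<le> s \<Longrightarrow> s \<le> b \<Longrightarrow> g' s \<le> c" and "a \<le> b"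
  shows "g b \<le> g a + c * (b - a)"
proof -
  have "(\<lambda>s. g s - c * s) b \<le> (\<lambda>s. g s - c * s) a"
  proof (rule DERIV_nonpos_imp_nonincreasing[OF assms(3)])
    fix s assume s: "a \<le> s" "s \<le> b"
    have "((\<lambda>s. g s - c * s) has_real_derivative g' s - c) (at s)"
      using assms(1)[OF s] by (auto intro!: derivative_eq_intros)
    moreover have "g' s - c \<le> 0" using assms(2)[OF s] by linarith
    ultimately show "\<exists>y. ((\<lambda>s. g s - c * s) has_real_derivative y) (at s) \<and> y \<le> 0" by blast
  qed
  then show ?thesis by (simp add: algebra_simps)
qed

lemma ge_affine_of_deriv_bounded:
  fixes f f' :: "real \<Rightarrow> real"
  assumes "\<And>s. a \<le> s \<Longrightarrow> s \<le> b \<Longrightarrow> (f has_real_derivative f' s) (at s)"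
    and "\<And>s. a \<le> s \<Longrightarrow> s \<le> b \<Longrightarrow> \<bar>f' s\<bar> \<le> M" and "a \<le> b"
  shows "f a - M * (b - a) \<le> f b"
proof -
  have "- f b \<le> - f a + M * (b - a)"
  proof (rule le_affine_of_deriv_le[of a b _ "\<lambda>s. - f' s"])
    fix s assume s: "a \<le> s" "s \<le> b"
    show "((\<lambda>s. - f s) has_real_derivative - f' s) (at s)" using assms(1)[OF s] by (rule DERIV_minus)
    show "- f' s \<le> M" using assms(2)[OF s] by (simp add: abs_le_iff)
  qed (fact assms(3))
  then show ?thesis by simp
qed

section \<open>Barbalat's lemma\<close>

text \<open>If \<open>f\<close> is Lipschitz and bounded from below by \<open>\<epsilon>\<close> at some late time, then it stays above
  \<open>\<epsilon>/2\<close> on a window of fixed length, during which \<open>g\<close> increases by a fixed amount; this is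
  incompatible with convergence of \<open>g\<close>.\<close>

lemma eventually_less_of_deriv_ge:
  fixes g g' f f' :: "real \<Rightarrow> real"
  assumes lim: "(g \<longlongrightarrow> L) at_top"
    and dg: "\<And>t. a \<le> t \<Longrightarrow> (g has_real_derivative g' t) (at t)"
    and fg: "\<And>t. a \<le> t \<Longrightarrow> f t \<le> g' t"
    and df: "\<And>t. a \<le> t \<Longrightarrow> (f has_real_derivative f' t) (at t)"
    and bf: "\<And>t. a \<le> t \<Longrightarrow> \<bar>f' t\<bar> \<le> M"
    and "0 < \<epsilon>"
  shows "eventually (\<lambda>t. f t < \<epsilon>) at_top"
proof -
  have M0: "0 \<le> M" using bf[of a] by simp
  define h where "h = \<epsilon> / (2 * (M + 1))"
  have h0: "0 < h" using \<open>0 < \<epsilon>\<close> M0 by (simp add: h_def)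
  have Mh: "M * h \<le> \<epsilon> / 2" using \<open>0 < \<epsilon>\<close> M0 by (simp add: h_def field_simps)
  have "eventually (\<lambda>t. dist (g t) L < \<epsilon> * h / 4) at_top"
    using tendstoD[OF lim, of "\<epsilon> * h / 4"] \<open>0 < \<epsilon>\<close> h0 by simp
  then obtain T where T: "\<And>t. T \<le> t \<Longrightarrow> \<bar>g t - L\<bar> < \<epsilon> * h / 4"
    unfolding eventually_at_top_linorder dist_real_def by blast
  show ?thesis unfolding eventually_at_top_linorder
  proof (intro exI allI impI)
    fix t assume t: "max T a \<le> t"
    show "f t < \<epsilon>"
    proof (rule ccontr)
      assume "\<not> f t < \<epsilon>"
      have window: "\<epsilon> / 2 \<le> f s" if "t \<le> s" "s \<le> t + h" for s
      proof -
        have "f t - M * (s - t) \<le> f s"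
          by (rule ge_affine_of_deriv_bounded[of t s f f' M]) (use that t df bf in auto)
        moreover have "M * (s - t) \<le> M * h" using that M0 by (simp add: mult_left_mono)
        ultimately show ?thesis using \<open>\<not> f t < \<epsilon>\<close> Mh by linarith
      qed
      have "- g (t + h) \<le> - g t + (- (\<epsilon> / 2)) * ((t + h) - t)"
      proof (rule le_affine_of_deriv_le[of t "t + h" _ "\<lambda>s. - g' s"])
        fix s assume s: "t \<le> s" "s \<le> t + h"
        show "((\<lambda>s. - g s) has_real_derivative - g' s) (at s)"
          using dg[of s] s t by (auto intro: DERIV_minus)
        show "- g' s \<le> - (\<epsilon> / 2)" using window[OF s] fg[of s] s t by simp
      qed (use h0 in simp)
      then have "g t + \<epsilon> * h / 2 \<le> g (t + h)" by simp
      moreover have "\<bar>g t - L\<bar> < \<epsilon> * h / 4" "\<bar>g (t + h) - L\<bar> < \<epsilon> * h / 4"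
        using T t h0 by auto
      ultimately show False by (simp only: abs_less_iff) linarith
    qed
  qed
qed

lemma barbalat:
  fixes g f f' :: "real \<Rightarrow> real"
  assumes dg: "\<And>t. a \<le> t \<Longrightarrow> (g has_real_derivative f t) (at t)"
    and df: "\<And>t. a \<le> t \<Longrightarrow> (f has_real_derivative f' t) (at t)"
    and bf: "\<And>t. a \<le> t \<Longrightarrow> \<bar>f' t\<bar> \<le> M"
    and lim: "(g \<longlongrightarrow> L) at_top"
  shows "(f \<longlongrightarrow> 0) at_top"
proof (rule tendstoI)
  fix \<epsilon> :: real assume "0 < \<epsilon>"
  have "eventually (\<lambda>t. f t < \<epsilon>) at_top"
    by (rule eventually_less_of_deriv_ge[of g L a f f f' M, OF lim dg _ df bf \<open>0 < \<epsilon>\<close>]) simp_all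
  moreover have "eventually (\<lambda>t. - f t < \<epsilon>) at_top"
  proof (rule eventually_less_of_deriv_ge[of "\<lambda>t. - g t" "- L" a "\<lambda>t. - f t"])
    show "((\<lambda>t. - g t) \<longlongrightarrow> - L) at_top" by (rule tendsto_minus[OF lim])
    fix t assume "a \<le> t"
    show "((\<lambda>t. - g t) has_real_derivative - f t) (at t)" by (rule DERIV_minus[OF dg[OF \<open>a \<le> t\<close>]])
    show "((\<lambda>t. - f t) has_real_derivative - f' t) (at t)" by (rule DERIV_minus[OF df[OF \<open>a \<le> t\<close>]])
    show "\<bar>- f' t\<bar> \<le> M" using bf[OF \<open>a \<le> t\<close>] by simp
  qed (use \<open>0 < \<epsilon>\<close> in simp_all)
  ultimately show "eventually (\<lambda>t. dist (f t) 0 < \<epsilon>) at_top"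
    by eventually_elim (simp add: abs_less_iff)
qed

lemma tendsto_Inf_of_antimono_bounded:
  fixes g :: "real \<Rightarrow> real"
  assumes mono: "\<And>s u. a \<le> s \<Longrightarrow> s \<le> u \<Longrightarrow> g u \<le> g s"
    and bdd: "\<And>t. a \<le> t \<Longrightarrow> L \<le> g t"
  shows "(g \<longlongrightarrow> Inf (g ` {a..})) at_top"
proof (rule decreasing_tendsto)
  have bdd': "bdd_below (g ` {a..})" using bdd by (auto intro!: bdd_belowI2)
  show "eventually (\<lambda>t. Inf (g ` {a..}) \<le> g t) at_top"
    unfolding eventually_at_top_linorder using bdd' by (auto intro!: exI[of _ a] cInf_lower)
  fix y assume "Inf (g ` {a..}) < y"
  then obtain T where T: "a \<le> T" "g T < y"
    using cInf_less_iff[of "g ` {a..}" y] bdd' by auto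
  have "g t < y" if "T \<le> t" for t
    using mono[of T t] T that by linarith
  then show "eventually (\<lambda>t. g t < y) at_top"
    unfolding eventually_at_top_linorder by blast
qed

lemma tendsto_zero_of_dissipation:
  fixes g g' F F' :: "real \<Rightarrow> real"
  assumes dg: "\<And>t. a \<le> t \<Longrightarrow> (g has_real_derivative g' t) (at t)"
    and dissip: "\<And>t. a \<le> t \<Longrightarrow> g' t \<le> - F t"
    and F0: "\<And>t. a \<le> t \<Longrightarrow> 0 \<le> F t"
    and dF: "\<And>t. a \<le> t \<Longrightarrow> (F has_real_derivative F' t) (at t)"
    and bF: "\<And>t. a \<le> t \<Longrightarrow> \<bar>F' t\<bar> \<le> M"
    and gL: "\<And>t. a \<le> t \<Longrightarrow> L \<le> g t"
  shows "(F \<longlongrightarrow> 0) at_top"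
proof (rule tendstoI)
  fix \<epsilon> :: real assume "0 < \<epsilon>"
  have "g u \<le> g s" if "a \<le> s" "s \<le> u" for s u
  proof -
    have "g u \<le> g s + 0 * (u - s)"
    proof (rule le_affine_of_deriv_le[of s u g g'])
      fix r assume "s \<le> r" "r \<le> u"
      then have "a \<le> r" using that by simp
      then show "(g has_real_derivative g' r) (at r)" "g' r \<le> 0"
        using dg[of r] dissip[of r] F0[of r] by auto
    qed (fact that(2))
    then show ?thesis by simp
  qed
  then have "(g \<longlongrightarrow> Inf (g ` {a..})) at_top"
    using gL by (rule tendsto_Inf_of_antimono_bounded)
  then have "((\<lambda>t. - g t) \<longlongrightarrow> - Inf (g ` {a..})) at_top" by (rule tendsto_minus)
  then have "eventually (\<lambda>t. F t < \<epsilon>) at_top"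
  proof (rule eventually_less_of_deriv_ge[of _ _ a "\<lambda>t. - g' t"])
    fix t assume "a \<le> t"
    show "((\<lambda>t. - g t) has_real_derivative - g' t) (at t)" by (rule DERIV_minus[OF dg[OF \<open>a \<le> t\<close>]])
    show "F t \<le> - g' t" using dissip[OF \<open>a \<le> t\<close>] by simp
  qed (use dF bF \<open>0 < \<epsilon>\<close> in auto)
  moreover have "eventually (\<lambda>t. 0 \<le> F t) at_top"
    using F0 by (auto simp: eventually_at_top_linorder)
  ultimately show "eventually (\<lambda>t. dist (F t) 0 < \<epsilon>) at_top"
    by eventually_elim simp
qed

lemma tendsto_zero_if_square_le:
  fixes f g :: "'a \<Rightarrow> real"
  assumes "(g \<longlongrightarrow> 0) F" "eventually (\<lambda>t. (f t)^2 \<le> g t) F"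
  shows "(f \<longlongrightarrow> 0) F"
proof -
  have "((\<lambda>t. (f t)^2) \<longlongrightarrow> 0) F"
    by (rule tendsto_sandwich[of "\<lambda>_. 0" _ _ g]) (use assms in auto)
  then have "((\<lambda>t. sqrt ((f t)^2)) \<longlongrightarrow> sqrt 0) F" by (rule tendsto_real_sqrt)
  then show ?thesis by (simp add: tendsto_rabs_zero_cancel)
qed

section \<open>Scalar inequalities\<close>

definition volterra :: "real \<Rightarrow> real" where
  "volterra x = x - 1 - ln x"

lemma volterra_nonneg: "0 < x \<Longrightarrow> 0 \<le> volterra x"
  using ln_le_minus_one[of x] by (simp add: volterra_def)

lemma volterra_le: assumes "0 < x" shows "volterra x \<le> (x - 1)^2 / x"
proof -
  have "ln (1/x) \<le> 1/x - 1" using assms by (intro ln_le_minus_one) simp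
  then have "- ln x \<le> 1/x - 1" using assms by (simp add: ln_div)
  moreover have "(x - 1)^2 / x = x - 2 + 1/x" using assms by (simp add: field_simps power2_eq_square)
  ultimately show ?thesis by (simp add: volterra_def)
qed

lemma volterra_ge:
  assumes x: "0 < x" "x \<le> M" and M: "1 \<le> M"
  shows "(x - 1)^2 / (2 * M) \<le> volterra x"
proof (cases "x \<le> 1")
  case True
  let ?h = "\<lambda>y::real. y - 1 - ln y - (y - 1)^2 / 2"
  have "?h 1 \<le> ?h x"
  proof (rule DERIV_nonpos_imp_nonincreasing[OF True])
    fix y assume y: "x \<le> y" "y \<le> 1"
    then have y0: "0 < y" using x by simp
    have "(?h has_real_derivative (1 - 1/y - (y - 1))) (at y)"
      using y0 by (auto intro!: derivative_eq_intros simp: field_simps power2_eq_square)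
    moreover have "1 - 1/y - (y - 1) = - ((y - 1)^2 / y)" using y0 by (simp add: field_simps power2_eq_square)
    ultimately show "\<exists>d. (?h has_real_derivative d) (at y) \<and> d \<le> 0" using y0 by force
  qed
  moreover have "(x - 1)^2 / (2 * M) \<le> (x - 1)^2 / 2" using M by (intro divide_left_mono) auto
  ultimately show ?thesis by (simp add: volterra_def)
next
  case False
  let ?h = "\<lambda>y::real. y - 1 - ln y - (y - 1)^2 / (2 * M)"
  have "?h 1 \<le> ?h x"
  proof (rule DERIV_nonneg_imp_nondecreasing[of 1 x ?h])
    fix y assume y: "1 \<le> y" "y \<le> x"
    then have y0: "0 < y" by simp
    have "(?h has_real_derivative (1 - 1/y - (y - 1) / M)) (at y)"
      using y0 M by (auto intro!: derivative_eq_intros simp: field_simps power2_eq_square)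
    moreover have "1 - 1/y - (y - 1) / M = (y - 1) * (M - y) / (y * M)" using y0 M by (simp add: field_simps)
    moreover have "0 \<le> (y - 1) * (M - y) / (y * M)"
      using y0 M y x by (intro divide_nonneg_nonneg mult_nonneg_nonneg) auto
    ultimately show "\<exists>d. (?h has_real_derivative d) (at y) \<and> d \<ge> 0" by force
  qed (use False in simp)
  then show ?thesis by (simp add: volterra_def)
qed

lemma volterra_scaled_eq:
  "0 < X \<Longrightarrow> 0 < Xs \<Longrightarrow> (X - Xs * ln X) - (Xs - Xs * ln Xs) = Xs * volterra (X / Xs)"
  by (simp add: volterra_def ln_div field_simps)

lemma volterra_scaled_ge:
  assumes "0 < Xs" "Xs \<le> M" "0 < X" "X \<le> M"
  shows "(X - Xs)^2 / (2 * M) \<le> Xs * volterra (X / Xs)"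
proof -
  have M: "0 < M" using assms by linarith
  have "(X - Xs)^2 / (2 * M) = Xs * ((X / Xs - 1)^2 / (2 * (M / Xs)))"
    using assms M by (simp add: field_simps power2_eq_square)
  also have "\<dots> \<le> Xs * volterra (X / Xs)"
    by (intro mult_left_mono volterra_ge) (use assms in \<open>simp_all add: divide_right_mono\<close>)
  finally show ?thesis .
qed

lemma volterra_scaled_le:
  assumes "0 < Xs" "Xs / 2 \<le> X"
  shows "Xs * volterra (X / Xs) \<le> 2 * (X - Xs)^2 / Xs"
proof -
  have x: "1/2 \<le> X / Xs" using assms by (simp add: field_simps)
  then have x0: "0 < X / Xs" by linarith
  have "volterra (X / Xs) \<le> (X / Xs - 1)^2 / (X / Xs)" by (rule volterra_le[OF x0])
  also have "\<dots> \<le> (X / Xs - 1)^2 / (1/2)"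
  proof (rule divide_left_mono)
    show "0 < X / Xs * (1/2)" using x0 by simp
  qed (use x in simp_all)
  also have "\<dots> = 2 * (X / Xs - 1)^2" by simp
  finally have "Xs * volterra (X / Xs) \<le> Xs * (2 * (X / Xs - 1)^2)"
    by (rule mult_left_mono) (use assms(1) in simp)
  also have "\<dots> = 2 * (X - Xs)^2 / Xs" using assms(1) by (simp add: field_simps power2_eq_square)
  finally show ?thesis .
qed

lemma weighted_volterra_ge:
  assumes "0 < Xs" "Xs \<le> M" "0 < X" "X \<le> M" "0 \<le> w" "c \<le> w / (2 * M)"
  shows "c * (X - Xs)^2 \<le> w * (Xs * volterra (X / Xs))"
proof -
  have "c * (X - Xs)^2 \<le> w / (2 * M) * (X - Xs)^2" using assms(6) by (rule mult_right_mono) simp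
  also have "\<dots> = w * ((X - Xs)^2 / (2 * M))" by simp
  also have "\<dots> \<le> w * (Xs * volterra (X / Xs))"
    using volterra_scaled_ge[OF assms(1-4)] assms(5) by (rule mult_left_mono)
  finally show ?thesis .
qed

lemma weighted_volterra_le:
  assumes "0 < Xs" "Xs / 2 \<le> X" "0 \<le> w" "2 * w / Xs \<le> c"
  shows "w * (Xs * volterra (X / Xs)) \<le> c * (X - Xs)^2"
proof -
  have "w * (Xs * volterra (X / Xs)) \<le> w * (2 * (X - Xs)^2 / Xs)"
    using volterra_scaled_le[OF assms(1,2)] assms(3) by (rule mult_left_mono)
  also have "\<dots> = 2 * w / Xs * (X - Xs)^2" by simp
  also have "\<dots> \<le> c * (X - Xs)^2" using assms(4) by (rule mult_right_mono) simp
  finally show ?thesis .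
qed

lemma three_le_sum_if_prod_one:
  fixes x y z :: real
  assumes "0 < x" "0 < y" "0 < z" "x * y * z = 1"
  shows "3 \<le> x + y + z"
proof -
  have "ln x + ln y + ln z = ln (x * y * z)" using assms ln_mult[of "x * y" z] ln_mult[of x y] by simp
  then have "ln x + ln y + ln z = 0" using assms by simp
  moreover have "ln x \<le> x - 1" "ln y \<le> y - 1" "ln z \<le> z - 1" using assms by (auto intro: ln_le_minus_one)
  ultimately show ?thesis by linarith
qed

lemma neg_part_cross_le:
  fixes u v b K :: real
  assumes "0 \<le> b" "b \<le> K"
  shows "2 * b * (min u 0 * v) \<le> K * ((min u 0)^2 + (min v 0)^2)"
proof -
  have "min u 0 * v \<le> min u 0 * min v 0" by (rule mult_left_mono_neg) auto
  moreover have "2 * (min u 0 * min v 0) \<le> (min u 0)^2 + (min v 0)^2"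
    using sum_squares_bound[of "min u 0" "min v 0"] by (simp add: algebra_simps)
  ultimately have "2 * (min u 0 * v) \<le> (min u 0)^2 + (min v 0)^2" by linarith
  then have "b * (2 * (min u 0 * v)) \<le> b * ((min u 0)^2 + (min v 0)^2)"
    using assms(1) by (rule mult_left_mono)
  also have "\<dots> \<le> K * ((min u 0)^2 + (min v 0)^2)" using assms(2) by (rule mult_right_mono) simp
  finally have "b * (2 * (min u 0 * v)) \<le> K * ((min u 0)^2 + (min v 0)^2)" .
  then show ?thesis by (simp add: algebra_simps)
qed

lemma neg_part_affine_le:
  fixes u L a K :: real
  assumes "0 \<le> L" "\<bar>a\<bar> \<le> K"
  shows "2 * min u 0 * (L + a * u) \<le> 2 * K * (min u 0)^2"
proof -
  have "2 * min u 0 * (a * u) = 2 * a * (min u 0)^2" by (simp add: min_def power2_eq_square)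
  also have "\<dots> \<le> 2 * K * (min u 0)^2"
    using assms(2) by (intro mult_right_mono) (auto simp: abs_le_iff)
  finally have "2 * min u 0 * (a * u) \<le> 2 * K * (min u 0)^2" .
  moreover have "2 * min u 0 * L \<le> 0" using assms(1) by (simp add: mult_nonpos_nonneg)
  ultimately show ?thesis by (simp add: algebra_simps)
qed

lemma neg_part_linear_le:
  fixes u v w L a b c K :: real
  assumes "0 \<le> L" "\<bar>a\<bar> \<le> K" "0 \<le> b" "b \<le> K" "0 \<le> c" "c \<le> K"
  shows "2 * min u 0 * (L + a * u + b * v + c * w) \<le> K * (4 * (min u 0)^2 + (min v 0)^2 + (min w 0)^2)"
proof -
  have "2 * min u 0 * (L + a * u) \<le> 2 * K * (min u 0)^2"
    by (rule neg_part_affine_le) (fact assms)+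
  moreover have "2 * b * (min u 0 * v) \<le> K * ((min u 0)^2 + (min v 0)^2)"
    by (rule neg_part_cross_le) (fact assms)+
  moreover have "2 * c * (min u 0 * w) \<le> K * ((min u 0)^2 + (min w 0)^2)"
    by (rule neg_part_cross_le) (fact assms)+
  ultimately show ?thesis by (simp add: algebra_simps)
qed

section \<open>The model and its endemic equilibrium\<close>

lemma dist_state_sq:
  fixes a b c d e a' b' c' d' e' :: real
  shows "(dist (a, b, c, d, e) (a', b', c', d', e'))^2
    = (a - a')^2 + (b - b')^2 + (c - c')^2 + (d - d')^2 + (e - e')^2"
  by (simp add: dist_prod_def dist_real_def add_nonneg_nonneg)

lemma abs_le_dist_state:
  fixes a b c d e a' b' c' d' e' :: real
  shows "\<bar>a - a'\<bar> \<le> dist (a, b, c, d, e) (a', b', c', d', e')" "\<bar>b - b'\<bar> \<le> dist (a, b, c, d, e) (a', b', c', d', e')"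
    "\<bar>c - c'\<bar> \<le> dist (a, b, c, d, e) (a', b', c', d', e')" "\<bar>d - d'\<bar> \<le> dist (a, b, c, d, e) (a', b', c', d', e')"
    "\<bar>e - e'\<bar> \<le> dist (a, b, c, d, e) (a', b', c', d', e')"
proof -
  let ?D = "dist (a, b, c, d, e) (a', b', c', d', e')"
  note sq = dist_state_sq[of a b c d e a' b' c' d' e']
  have nn: "0 \<le> (a - a')^2" "0 \<le> (b - b')^2" "0 \<le> (c - c')^2" "0 \<le> (d - d')^2" "0 \<le> (e - e')^2"
    by simp_all
  show "\<bar>a - a'\<bar> \<le> ?D" by (rule power2_le_imp_le) (use sq nn in simp_all)
  show "\<bar>b - b'\<bar> \<le> ?D" by (rule power2_le_imp_le) (use sq nn in simp_all)
  show "\<bar>c - c'\<bar> \<le> ?D" by (rule power2_le_imp_le) (use sq nn in simp_all)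
  show "\<bar>d - d'\<bar> \<le> ?D" by (rule power2_le_imp_le) (use sq nn in simp_all)
  show "\<bar>e - e'\<bar> \<le> ?D" by (rule power2_le_imp_le) (use sq nn in simp_all)
qed

locale prep_model =
  fixes Lam mu beta rho phi alpha omega psi etaC etaA :: real
  assumes Lam_pos: "0 < Lam" and mu_pos: "0 < mu" and beta_pos: "0 < beta"
    and rho_pos: "0 < rho" and phi_pos: "0 < phi" and alpha_pos: "0 < alpha"
    and omega_pos: "0 < omega" and psi_nonneg: "0 \<le> psi"
    and etaC_pos: "0 < etaC" and etaA_pos: "0 < etaA"
begin

abbreviation "rhs \<equiv> hiv_rhs Lam mu beta rho phi alpha omega psi etaC etaA"

definition "beta1 = beta * mu / Lam"
definition "xi1 = alpha + mu"
definition "xi2 = omega + mu"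
definition "xi3 = rho + phi + mu"
definition "Nmax = Lam / mu"
definition "state_box = {0..Nmax} \<times> {0..Nmax} \<times> {0..Nmax} \<times> {0..Nmax} \<times> {0..Nmax}"

definition "fS S I C A = Lam - beta1 * (I + etaC * C + etaA * A) * S - (mu + psi) * S"
definition "fI S I C A = beta1 * (I + etaC * C + etaA * A) * S - xi3 * I + alpha * A + omega * C"
definition "fC I C = phi * I - xi2 * C"
definition "fA I A = rho * I - xi1 * A"
definition "fE S E = psi * S - mu * E"
definition "fS_deriv S I C A = - beta1 * (fI S I C A + etaC * fC I C + etaA * fA I A) * S
  - (beta1 * (I + etaC * C + etaA * A) + mu + psi) * fS S I C A"

lemma rhs_eq: "rhs (S, I, C, A, E) = (fS S I C A, fI S I C A, fC I C, fA I A, fE S E)"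
  by (simp add: hiv_rhs_def Let_def beta1_def xi1_def xi2_def xi3_def
      fS_def fI_def fC_def fA_def fE_def)

lemma beta1_pos: "0 < beta1" and xi_pos: "0 < xi1" "0 < xi2" "0 < xi3" and Nmax_pos: "0 < Nmax"
  using Lam_pos mu_pos beta_pos rho_pos phi_pos alpha_pos omega_pos
  by (auto simp: beta1_def xi1_def xi2_def xi3_def Nmax_def)

lemma fS_eq: "fS S I C A = Lam - (beta1 * (I + etaC * C + etaA * A) + mu + psi) * S"
  by (simp add: fS_def algebra_simps)

lemma total_rate: "fS S I C A + fI S I C A + fC I C + fA I A + fE S E = Lam - mu * (S + I + C + A + E)"
  by (simp add: fS_def fI_def fC_def fA_def fE_def xi1_def xi2_def xi3_def algebra_simps)

lemma abs_force_le:
  assumes "\<bar>I\<bar> \<le> B" "\<bar>C\<bar> \<le> B" "\<bar>A\<bar> \<le> B"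
  shows "\<bar>I + etaC * C + etaA * A\<bar> \<le> (1 + etaC + etaA) * B"
proof -
  have "\<bar>I + etaC * C + etaA * A\<bar> \<le> \<bar>I\<bar> + etaC * \<bar>C\<bar> + etaA * \<bar>A\<bar>"
    using abs_triangle_ineq[of I "etaC * C"] abs_triangle_ineq[of "I + etaC * C" "etaA * A"]
      etaC_pos etaA_pos by (simp add: abs_mult)
  also have "\<dots> \<le> B + etaC * B + etaA * B"
    using assms etaC_pos etaA_pos by (intro add_mono mult_left_mono) auto
  finally show ?thesis by (simp add: algebra_simps)
qed

lemma S_neg_part_le:
  obtains K where "\<And>S I C A. \<bar>I\<bar> \<le> B \<Longrightarrow> \<bar>C\<bar> \<le> B \<Longrightarrow> \<bar>A\<bar> \<le> B \<Longrightarrow>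
    2 * min S 0 * fS S I C A \<le> K * (min S 0)^2"
proof
  fix S I C A assume "\<bar>I\<bar> \<le> B" "\<bar>C\<bar> \<le> B" "\<bar>A\<bar> \<le> B"
  then have "\<bar>beta1 * (I + etaC * C + etaA * A)\<bar> \<le> beta1 * ((1 + etaC + etaA) * B)"
    using beta1_pos by (simp add: abs_mult abs_force_le)
  then have "\<bar>- (beta1 * (I + etaC * C + etaA * A) + mu + psi)\<bar> \<le> beta1 * (1 + etaC + etaA) * B + mu + psi"
    using mu_pos psi_nonneg by (simp add: abs_le_iff)
  then have "2 * min S 0 * (Lam + (- (beta1 * (I + etaC * C + etaA * A) + mu + psi)) * S)
      \<le> 2 * (beta1 * (1 + etaC + etaA) * B + mu + psi) * (min S 0)^2"
    using Lam_pos by (intro neg_part_affine_le) auto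
  moreover have "fS S I C A = Lam + (- (beta1 * (I + etaC * C + etaA * A) + mu + psi)) * S"
    by (simp add: fS_eq algebra_simps)
  ultimately show "2 * min S 0 * fS S I C A \<le> 2 * (beta1 * (1 + etaC + etaA) * B + mu + psi) * (min S 0)^2"
    by simp
qed

lemma infected_neg_part_le:
  obtains K where "\<And>S I C A. 0 \<le> S \<Longrightarrow> S \<le> B \<Longrightarrow>
    2 * min I 0 * fI S I C A + 2 * min C 0 * fC I C + 2 * min A 0 * fA I A
      \<le> K * ((min I 0)^2 + (min C 0)^2 + (min A 0)^2)"
proof
  define K where "K = beta1 * B * (1 + etaC + etaA) + xi1 + xi2 + xi3 + phi + rho + omega + alpha"
  fix S I C A assume S: "0 \<le> S" "S \<le> B"
  have bS: "0 \<le> beta1 * S" "beta1 * S \<le> beta1 * B" using S beta1_pos by simp_all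
  then have bSC: "0 \<le> beta1 * S * etaC" "beta1 * S * etaC \<le> beta1 * B * etaC"
    and bSA: "0 \<le> beta1 * S * etaA" "beta1 * S * etaA \<le> beta1 * B * etaA"
    using etaC_pos etaA_pos by (simp_all add: mult_right_mono)
  have K: "K = beta1 * B + beta1 * B * etaC + beta1 * B * etaA + xi1 + xi2 + xi3 + phi + rho + omega + alpha"
    by (simp add: K_def algebra_simps)
  have coeff: "\<bar>beta1 * S - xi3\<bar> \<le> K" "0 \<le> beta1 * S * etaC + omega" "beta1 * S * etaC + omega \<le> K"
      "0 \<le> beta1 * S * etaA + alpha" "beta1 * S * etaA + alpha \<le> K"
      "\<bar>- xi2\<bar> \<le> K" "\<bar>- xi1\<bar> \<le> K" "phi \<le> K" "rho \<le> K"
    unfolding K abs_le_iff using bS bSC bSA xi_pos phi_pos rho_pos omega_pos alpha_pos by linarith+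
  have "2 * min I 0 * fI S I C A \<le> K * (4 * (min I 0)^2 + (min C 0)^2 + (min A 0)^2)"
    using neg_part_linear_le[of 0 "beta1 * S - xi3" K "beta1 * S * etaC + omega" "beta1 * S * etaA + alpha" I C A]
      coeff by (simp add: fI_def algebra_simps)
  moreover have "2 * min C 0 * fC I C \<le> K * (4 * (min C 0)^2 + (min I 0)^2 + (min A 0)^2)"
    using neg_part_linear_le[of 0 "- xi2" K phi 0 C I A] coeff phi_pos by (simp add: fC_def algebra_simps)
  moreover have "2 * min A 0 * fA I A \<le> K * (4 * (min A 0)^2 + (min I 0)^2 + (min C 0)^2)"
    using neg_part_linear_le[of 0 "- xi1" K rho 0 A I C] coeff rho_pos by (simp add: fA_def algebra_simps)
  ultimately show "2 * min I 0 * fI S I C A + 2 * min C 0 * fC I C + 2 * min A 0 * fA I A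
      \<le> (6 * K) * ((min I 0)^2 + (min C 0)^2 + (min A 0)^2)"
    by (simp add: algebra_simps)
qed

end

locale prep_endemic = prep_model +
  assumes R0_gt_1: "1 < R0 Lam mu beta rho phi alpha omega psi etaC etaA"
begin

definition "NN = xi1 * (phi + xi2) + rho * xi2"
definition "DD = xi1 * (xi2 + etaC * phi) + etaA * rho * xi2"
definition "Ss = mu * NN / (beta1 * DD)"

text \<open>\<open>Is\<close> solves \<open>S' = 0\<close> once \<open>C = phi I / xi2\<close> and \<open>A = rho I / xi1\<close> are substituted.\<close>

definition "Is = (Lam - (mu + psi) * Ss) * xi1 * xi2 / (mu * NN)"
definition "Cs = phi * Is / xi2"
definition "As = rho * Is / xi1"
definition "Es = psi * Ss / mu"
definition "Ts = Is + etaC * Cs + etaA * As"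
definition "endemic = (Ss, Is, Cs, As, Es)"

lemma NN_pos: "0 < NN" and DD_pos: "0 < DD"
  using xi_pos etaC_pos etaA_pos rho_pos phi_pos unfolding NN_def DD_def
  by (auto intro!: add_pos_pos mult_pos_pos)

lemma Ss_pos: "0 < Ss"
  using beta1_pos NN_pos DD_pos mu_pos by (simp add: Ss_def)

text \<open>\<open>R0 > 1\<close> says exactly that the disease-free value \<open>Lam / (mu + psi)\<close> of \<open>S\<close> exceeds \<open>Ss\<close>.\<close>

lemma R0_eq: "R0 Lam mu beta rho phi alpha omega psi etaC etaA = Lam / ((mu + psi) * Ss)"
proof -
  have "R0 Lam mu beta rho phi alpha omega psi etaC etaA = Lam * beta1 * DD / ((mu + psi) * mu * NN)"
    by (simp add: R0_def Let_def beta1_def xi1_def xi2_def DD_def NN_def algebra_simps)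
  then show ?thesis
    unfolding Ss_def using beta1_pos NN_pos DD_pos mu_pos psi_nonneg by (simp add: field_simps)
qed

lemma Lam_gt: "(mu + psi) * Ss < Lam"
proof -
  have "0 < (mu + psi) * Ss" using mu_pos psi_nonneg Ss_pos by simp
  with R0_gt_1 R0_eq show ?thesis by (simp add: field_simps)
qed

lemma Is_pos: "0 < Is" and Cs_pos: "0 < Cs" and As_pos: "0 < As" and Ts_pos: "0 < Ts"
  and Es_nonneg: "0 \<le> Es"
proof -
  show Is: "0 < Is" using Lam_gt mu_pos NN_pos xi_pos by (simp add: Is_def)
  show "0 < Cs" "0 < As" using Is phi_pos rho_pos xi_pos by (simp_all add: Cs_def As_def)
  then show "0 < Ts" using Is etaC_pos etaA_pos by (simp add: Ts_def add_pos_pos)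
  show "0 \<le> Es" using psi_nonneg Ss_pos mu_pos by (simp add: Es_def)
qed

lemma incidence_at_endemic: "beta1 * Ts * Ss = mu * NN * Is / (xi1 * xi2)"
proof -
  have "Ts = Is * DD / (xi1 * xi2)"
    using xi_pos by (simp add: Ts_def Cs_def As_def DD_def field_simps)
  then show ?thesis unfolding Ss_def using beta1_pos DD_pos xi_pos by (simp add: field_simps)
qed

lemma S_balance: "Lam = beta1 * Ts * Ss + (mu + psi) * Ss"
  unfolding incidence_at_endemic using mu_pos NN_pos xi_pos by (simp add: Is_def field_simps)

lemma I_balance: "xi3 * Is = beta1 * Ts * Ss + alpha * As + omega * Cs"
proof -
  have "xi3 * xi1 * xi2 = mu * NN + alpha * rho * xi2 + omega * phi * xi1"
    by (simp add: NN_def xi1_def xi2_def xi3_def algebra_simps)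
  then have "xi3 * xi1 * xi2 * Is = (mu * NN + alpha * rho * xi2 + omega * phi * xi1) * Is"
    by simp
  then have "xi3 * Is = (mu * NN + alpha * rho * xi2 + omega * phi * xi1) * Is / (xi1 * xi2)"
    using xi_pos by (simp add: field_simps)
  also have "\<dots> = beta1 * Ts * Ss + alpha * As + omega * Cs"
    unfolding incidence_at_endemic using xi_pos by (simp add: As_def Cs_def field_simps)
  finally show ?thesis .
qed

lemma C_balance: "phi * Is = xi2 * Cs" and A_balance: "rho * Is = xi1 * As"
  and E_balance: "psi * Ss = mu * Es"
  using xi_pos mu_pos by (simp_all add: Cs_def As_def Es_def)

lemma endemic_is_equilibrium: "rhs endemic = 0"
  unfolding endemic_def rhs_eq zero_prod_def fS_def fI_def fC_def fA_def fE_def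
  using S_balance I_balance C_balance A_balance E_balance by (simp add: Ts_def algebra_simps)

lemma endemic_unique:
  assumes "rhs (S, I, C, A, E) = 0" "0 < I"
  shows "(S, I, C, A, E) = endemic"
proof -
  from assms(1) have e1: "fS S I C A = 0" and e2: "fI S I C A = 0" and e3: "fC I C = 0"
    and e4: "fA I A = 0" and e5: "fE S E = 0"
    unfolding rhs_eq zero_prod_def by auto
  have C: "C = Cs * I / Is" using e3 xi_pos Is_pos by (simp add: fC_def Cs_def field_simps)
  have A: "A = As * I / Is" using e4 xi_pos Is_pos by (simp add: fA_def As_def field_simps)
  have T: "I + etaC * C + etaA * A = Ts * I / Is"
    unfolding C A Ts_def using Is_pos by (simp add: field_simps)
  have "beta1 * (Ts * I / Is) * S = (xi3 * Is - alpha * As - omega * Cs) * I / Is"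
    using e2 unfolding T[symmetric] C A using Is_pos by (simp add: fI_def field_simps)
  also have "\<dots> = beta1 * Ts * Ss * I / Is" using I_balance by simp
  finally have S: "S = Ss" using beta1_pos Ts_pos Is_pos assms(2) by (simp add: field_simps)
  have "beta1 * (Ts * I / Is) * Ss = beta1 * Ts * Ss"
    using e1 S_balance T S by (simp add: fS_def)
  then have I: "I = Is" using beta1_pos Ts_pos Is_pos Ss_pos by (simp add: field_simps)
  show ?thesis using I S C A e5 E_balance mu_pos Is_pos unfolding endemic_def by (auto simp: fE_def field_simps)
qed

lemma endemic_le_Nmax: "Ss \<le> Nmax" "Is \<le> Nmax" "Cs \<le> Nmax" "As \<le> Nmax"
proof -
  have "Lam - mu * (Ss + Is + Cs + As + Es) = 0"
    using endemic_is_equilibrium total_rate[of Ss Is Cs As Es]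
    by (simp add: endemic_def rhs_eq zero_prod_def)
  then have "Ss + Is + Cs + As + Es = Nmax" using mu_pos by (simp add: Nmax_def field_simps)
  then show "Ss \<le> Nmax" "Is \<le> Nmax" "Cs \<le> Nmax" "As \<le> Nmax"
    using Ss_pos Is_pos Cs_pos As_pos Es_nonneg by linarith+
qed

end

section \<open>Solutions: invariance of the region and positivity\<close>

locale prep_solution = prep_model +
  fixes x :: "real \<Rightarrow> state5"
  assumes solution: "is_solution rhs x" and init_region: "x 0 \<in> OmegaP Lam mu psi"
begin

definition "xS t = fst (x t)"
definition "xI t = fst (snd (x t))"
definition "xC t = fst (snd (snd (x t)))"
definition "xA t = fst (snd (snd (snd (x t))))"
definition "xE t = snd (snd (snd (snd (x t))))"

lemma x_eq: "x t = (xS t, xI t, xC t, xA t, xE t)"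
  by (simp add: xS_def xI_def xC_def xA_def xE_def)

lemma deriv_within:
  assumes "0 \<le> t"
  shows "(xS has_real_derivative fS (xS t) (xI t) (xC t) (xA t)) (at t within {0..})"
    and "(xI has_real_derivative fI (xS t) (xI t) (xC t) (xA t)) (at t within {0..})"
    and "(xC has_real_derivative fC (xI t) (xC t)) (at t within {0..})"
    and "(xA has_real_derivative fA (xI t) (xA t)) (at t within {0..})"
    and "(xE has_real_derivative fE (xS t) (xE t)) (at t within {0..})"
proof -
  have d: "(x has_vector_derivative (fS (xS t) (xI t) (xC t) (xA t), fI (xS t) (xI t) (xC t) (xA t),
      fC (xI t) (xC t), fA (xI t) (xA t), fE (xS t) (xE t))) (at t within {0..})"
    using solution assms unfolding is_solution_def by (metis x_eq rhs_eq)
  note fst = has_vector_derivative_fst and snd = has_vector_derivative_snd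
  show "(xS has_real_derivative fS (xS t) (xI t) (xC t) (xA t)) (at t within {0..})"
    using fst[OF d] by (simp add: has_real_derivative_iff_has_vector_derivative xS_def[abs_def])
  show "(xI has_real_derivative fI (xS t) (xI t) (xC t) (xA t)) (at t within {0..})"
    using fst[OF snd[OF d]] by (simp add: has_real_derivative_iff_has_vector_derivative xI_def[abs_def])
  show "(xC has_real_derivative fC (xI t) (xC t)) (at t within {0..})"
    using fst[OF snd[OF snd[OF d]]]
    by (simp add: has_real_derivative_iff_has_vector_derivative xC_def[abs_def])
  show "(xA has_real_derivative fA (xI t) (xA t)) (at t within {0..})"
    using fst[OF snd[OF snd[OF snd[OF d]]]]
    by (simp add: has_real_derivative_iff_has_vector_derivative xA_def[abs_def])
  show "(xE has_real_derivative fE (xS t) (xE t)) (at t within {0..})"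
    using snd[OF snd[OF snd[OF snd[OF d]]]]
    by (simp add: has_real_derivative_iff_has_vector_derivative xE_def[abs_def])
qed

lemma xS_deriv: "0 < t \<Longrightarrow> (xS has_real_derivative fS (xS t) (xI t) (xC t) (xA t)) (at t)"
  and xI_deriv: "0 < t \<Longrightarrow> (xI has_real_derivative fI (xS t) (xI t) (xC t) (xA t)) (at t)"
  and xC_deriv: "0 < t \<Longrightarrow> (xC has_real_derivative fC (xI t) (xC t)) (at t)"
  and xA_deriv: "0 < t \<Longrightarrow> (xA has_real_derivative fA (xI t) (xA t)) (at t)"
  and xE_deriv: "0 < t \<Longrightarrow> (xE has_real_derivative fE (xS t) (xE t)) (at t)"
  using deriv_within[of t] by (auto intro: has_real_derivative_at_of_within_atLeast)

lemma continuous_components: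
  "continuous_on {0..} xS" "continuous_on {0..} xI" "continuous_on {0..} xC"
  "continuous_on {0..} xA" "continuous_on {0..} xE"
  by (rule continuous_on_atLeast_of_deriv_within, rule deriv_within, simp)+

lemma continuous_x: "continuous_on {0..} x"
proof -
  have "continuous_on {0..} (\<lambda>t. (xS t, xI t, xC t, xA t, xE t))"
    using continuous_components by (intro continuous_intros)
  moreover have "(\<lambda>t. (xS t, xI t, xC t, xA t, xE t)) = x" by (simp add: fun_eq_iff x_eq[symmetric])
  ultimately show ?thesis by (simp only:)
qed

lemma init: "0 \<le> xS 0" "0 \<le> xI 0" "0 \<le> xC 0" "0 \<le> xA 0" "0 \<le> xE 0"
  "xS 0 + xI 0 + xC 0 + xA 0 + xE 0 \<le> Nmax"
  using init_region unfolding OmegaP_def Nmax_def by (subst (asm) x_eq, simp)+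

lemma locally_bounded:
  obtains B where "\<And>t. 0 \<le> t \<Longrightarrow> t \<le> b \<Longrightarrow>
    \<bar>xS t\<bar> \<le> B \<and> \<bar>xI t\<bar> \<le> B \<and> \<bar>xC t\<bar> \<le> B \<and> \<bar>xA t\<bar> \<le> B"
proof -
  have "continuous_on {0..b} x" using continuous_x by (rule continuous_on_subset) auto
  then obtain B where B: "\<And>t. t \<in> {0..b} \<Longrightarrow> norm (x t) \<le> B"
    using continuous_on_compact_bound[of "{0..b}" x] by auto
  show ?thesis
  proof
    fix t assume "0 \<le> t" "t \<le> b"
    then have "dist (x t) (0, 0, 0, 0, 0) \<le> B" using B by (simp add: dist_norm zero_prod_def[symmetric])
    then show "\<bar>xS t\<bar> \<le> B \<and> \<bar>xI t\<bar> \<le> B \<and> \<bar>xC t\<bar> \<le> B \<and> \<bar>xA t\<bar> \<le> B"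
      using abs_le_dist_state[where a = "xS t" and b = "xI t" and c = "xC t" and d = "xA t" and e = "xE t"
          and a' = 0 and b' = 0 and c' = 0 and d' = 0 and e' = 0]
      by (simp add: x_eq[symmetric])
  qed
qed

text \<open>Nonnegativity: the squared negative parts satisfy a linear differential inequality and vanish
  initially, so they vanish for all times by Gronwall's lemma.\<close>

lemma S_nonneg: assumes "0 \<le> t" shows "0 \<le> xS t"
proof -
  obtain B where B: "\<And>s. 0 \<le> s \<Longrightarrow> s \<le> t \<Longrightarrow>
      \<bar>xS s\<bar> \<le> B \<and> \<bar>xI s\<bar> \<le> B \<and> \<bar>xC s\<bar> \<le> B \<and> \<bar>xA s\<bar> \<le> B"
    using locally_bounded[of t] by blast
  obtain K where K: "\<And>S I C A. \<bar>I\<bar> \<le> B \<Longrightarrow> \<bar>C\<bar> \<le> B \<Longrightarrow> \<bar>A\<bar> \<le> B \<Longrightarrow>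
      2 * min S 0 * fS S I C A \<le> K * (min S 0)^2"
    using S_neg_part_le[of B] by blast
  have "(min (xS t) 0)^2 = 0"
  proof (rule gronwall_zero[where q = "\<lambda>s. (min (xS s) 0)^2"])
    have "continuous_on {0..t} xS" using continuous_components(1) by (rule continuous_on_subset) auto
    then show "continuous_on {0..t} (\<lambda>s. (min (xS s) 0)^2)" by (intro continuous_intros)
    fix s assume s: "0 < s" "s < t"
    show "((\<lambda>s. (min (xS s) 0)^2) has_real_derivative
        2 * min (xS s) 0 * fS (xS s) (xI s) (xC s) (xA s)) (at s)"
      using DERIV_chain2[OF DERIV_neg_part_sq xS_deriv] s by simp
    show "2 * min (xS s) 0 * fS (xS s) (xI s) (xC s) (xA s) \<le> K * (min (xS s) 0)^2"
      using K B[of s] s by simp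
  qed (use init assms in simp_all)
  then show ?thesis by (simp add: min_def split: if_splits)
qed

lemma infected_nonneg: assumes "0 \<le> t" shows "0 \<le> xI t" "0 \<le> xC t" "0 \<le> xA t"
proof -
  obtain B where B: "\<And>s. 0 \<le> s \<Longrightarrow> s \<le> t \<Longrightarrow>
      \<bar>xS s\<bar> \<le> B \<and> \<bar>xI s\<bar> \<le> B \<and> \<bar>xC s\<bar> \<le> B \<and> \<bar>xA s\<bar> \<le> B"
    using locally_bounded[of t] by blast
  obtain K where K: "\<And>S I C A. 0 \<le> S \<Longrightarrow> S \<le> B \<Longrightarrow>
      2 * min I 0 * fI S I C A + 2 * min C 0 * fC I C + 2 * min A 0 * fA I A
        \<le> K * ((min I 0)^2 + (min C 0)^2 + (min A 0)^2)"
    using infected_neg_part_le[of B] by blast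
  let ?q = "\<lambda>s. (min (xI s) 0)^2 + (min (xC s) 0)^2 + (min (xA s) 0)^2"
  have "?q t = 0"
  proof (rule gronwall_zero[where q = ?q])
    have "continuous_on {0..t} xI" "continuous_on {0..t} xC" "continuous_on {0..t} xA"
      using continuous_components(2-4) by (auto elim: continuous_on_subset)
    then show "continuous_on {0..t} ?q" by (intro continuous_intros)
    fix s assume s: "0 < s" "s < t"
    show "(?q has_real_derivative 2 * min (xI s) 0 * fI (xS s) (xI s) (xC s) (xA s)
        + 2 * min (xC s) 0 * fC (xI s) (xC s) + 2 * min (xA s) 0 * fA (xI s) (xA s)) (at s)"
      using s by (intro DERIV_add DERIV_chain2[OF DERIV_neg_part_sq] xI_deriv xC_deriv xA_deriv)
    show "2 * min (xI s) 0 * fI (xS s) (xI s) (xC s) (xA s)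
        + 2 * min (xC s) 0 * fC (xI s) (xC s) + 2 * min (xA s) 0 * fA (xI s) (xA s) \<le> K * ?q s"
      using K B[of s] S_nonneg[of s] s by simp
  qed (use init assms in simp_all)
  moreover have "0 \<le> (min (xI t) 0)^2" "0 \<le> (min (xC t) 0)^2" "0 \<le> (min (xA t) 0)^2" by simp_all
  ultimately have "(min (xI t) 0)^2 = 0" "(min (xC t) 0)^2 = 0" "(min (xA t) 0)^2 = 0" by linarith+
  then show "0 \<le> xI t" "0 \<le> xC t" "0 \<le> xA t" by (simp_all add: min_def split: if_splits)
qed

lemma E_nonneg: assumes "0 \<le> t" shows "0 \<le> xE t"
proof (rule nonneg_of_deriv_ge_linear[OF continuous_components(5) xE_deriv, where c = mu])
  fix s :: real assume "0 < s"
  then show "0 \<le> fE (xS s) (xE s) + mu * xE s" using S_nonneg[of s] psi_nonneg by (simp add: fE_def)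
qed (use assms init in simp_all)

lemma total_le_Nmax: "0 \<le> t \<Longrightarrow> xS t + xI t + xC t + xA t + xE t \<le> Nmax"
proof -
  assume "0 \<le> t"
  let ?f = "\<lambda>s. Nmax - (xS s + xI s + xC s + xA s + xE s)"
  have "0 \<le> ?f t"
  proof (rule nonneg_of_deriv_ge_linear[where f = ?f and c = mu])
    show "continuous_on {0..} ?f" using continuous_components by (intro continuous_intros)
    fix s :: real assume "0 < s"
    let ?rates = "fS (xS s) (xI s) (xC s) (xA s) + fI (xS s) (xI s) (xC s) (xA s) + fC (xI s) (xC s)
      + fA (xI s) (xA s) + fE (xS s) (xE s)"
    show "(?f has_real_derivative - ?rates) (at s)"
      using \<open>0 < s\<close> by (auto intro!: derivative_eq_intros xS_deriv xI_deriv xC_deriv xA_deriv xE_deriv)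
    show "0 \<le> - ?rates + mu * ?f s"
      unfolding total_rate using mu_pos by (simp add: Nmax_def algebra_simps)
  qed (use init \<open>0 \<le> t\<close> in simp_all)
  then show ?thesis by simp
qed

lemma bounds:
  assumes "0 \<le> t"
  shows "0 \<le> xS t" "xS t \<le> Nmax" "0 \<le> xI t" "xI t \<le> Nmax" "0 \<le> xC t" "xC t \<le> Nmax"
    "0 \<le> xA t" "xA t \<le> Nmax" "0 \<le> xE t" "xE t \<le> Nmax"
  using S_nonneg[OF assms] infected_nonneg[OF assms] E_nonneg[OF assms] total_le_Nmax[OF assms]
  by linarith+

lemma x_in_state_box: "0 \<le> t \<Longrightarrow> x t \<in> state_box"
  using bounds[of t] by (subst x_eq) (simp add: state_box_def)

lemma force_bounds:
  assumes "0 \<le> t"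
  shows "0 \<le> xI t + etaC * xC t + etaA * xA t" "xI t + etaC * xC t + etaA * xA t \<le> (1 + etaC + etaA) * Nmax"
proof -
  have "etaC * xC t \<le> etaC * Nmax" "etaA * xA t \<le> etaA * Nmax"
    using bounds[OF assms] etaC_pos etaA_pos by simp_all
  then show "xI t + etaC * xC t + etaA * xA t \<le> (1 + etaC + etaA) * Nmax"
    using bounds[OF assms] by (simp add: algebra_simps)
  show "0 \<le> xI t + etaC * xC t + etaA * xA t"
    using bounds[OF assms] etaC_pos etaA_pos by simp
qed

text \<open>Positivity: each equation has the form \<open>u' + c u = (nonnegative inflow)\<close>.\<close>

lemma S_pos: "0 < t \<Longrightarrow> 0 < xS t"
proof (rule pos_of_deriv_gt_linear[OF continuous_components(1) xS_deriv])
  let ?c = "beta1 * (1 + etaC + etaA) * Nmax + mu + psi"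
  fix s :: real assume "0 < s"
  have "beta1 * (xI s + etaC * xC s + etaA * xA s) \<le> beta1 * ((1 + etaC + etaA) * Nmax)"
    using force_bounds[of s] \<open>0 < s\<close> beta1_pos by (intro mult_left_mono) auto
  then have "0 \<le> (?c - (beta1 * (xI s + etaC * xC s + etaA * xA s) + mu + psi)) * xS s"
    using bounds[of s] \<open>0 < s\<close> by (intro mult_nonneg_nonneg) (auto simp: algebra_simps)
  then show "0 < fS (xS s) (xI s) (xC s) (xA s) + ?c * xS s"
    using Lam_pos by (simp add: fS_eq algebra_simps)
qed (use init in simp_all)

lemma I_pos_of_I0:
  assumes "0 < xI 0" "0 \<le> t" shows "0 < xI t"
proof (rule pos_of_deriv_ge_linear[OF continuous_components(2) xI_deriv, where c = xi3])
  fix s :: real assume "0 < s"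
  then have "0 \<le> beta1 * (xI s + etaC * xC s + etaA * xA s) * xS s" "0 \<le> alpha * xA s" "0 \<le> omega * xC s"
    using bounds[of s] force_bounds[of s] beta1_pos alpha_pos omega_pos by simp_all
  then show "0 \<le> fI (xS s) (xI s) (xC s) (xA s) + xi3 * xI s" by (simp add: fI_def)
qed (use assms in simp_all)

lemma C_pos_of_C0:
  assumes "0 < xC 0" "0 \<le> t" shows "0 < xC t"
proof (rule pos_of_deriv_ge_linear[OF continuous_components(3) xC_deriv, where c = xi2])
  fix s :: real assume "0 < s"
  then show "0 \<le> fC (xI s) (xC s) + xi2 * xC s" using bounds[of s] phi_pos by (simp add: fC_def)
qed (use assms in simp_all)

lemma A_pos_of_A0:
  assumes "0 < xA 0" "0 \<le> t" shows "0 < xA t"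
proof (rule pos_of_deriv_ge_linear[OF continuous_components(4) xA_deriv, where c = xi1])
  fix s :: real assume "0 < s"
  then show "0 \<le> fA (xI s) (xA s) + xi1 * xA s" using bounds[of s] rho_pos by (simp add: fA_def)
qed (use assms in simp_all)

lemma CA_pos_of_I:
  assumes "\<And>s. 0 < s \<Longrightarrow> 0 < xI s" "0 < t"
  shows "0 < xC t" "0 < xA t"
proof -
  show "0 < xC t"
  proof (rule pos_of_deriv_gt_linear[OF continuous_components(3) xC_deriv, where c = xi2])
    fix s :: real assume "0 < s"
    then show "0 < fC (xI s) (xC s) + xi2 * xC s" using assms(1)[of s] phi_pos by (simp add: fC_def)
  qed (use assms(2) init in simp_all)
  show "0 < xA t"
  proof (rule pos_of_deriv_gt_linear[OF continuous_components(4) xA_deriv, where c = xi1])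
    fix s :: real assume "0 < s"
    then show "0 < fA (xI s) (xA s) + xi1 * xA s" using assms(1)[of s] rho_pos by (simp add: fA_def)
  qed (use assms(2) init in simp_all)
qed

lemma I_pos_of_CA:
  assumes "(\<forall>s>0. 0 < xC s) \<or> (\<forall>s>0. 0 < xA s)" "0 < t"
  shows "0 < xI t"
proof (rule pos_of_deriv_gt_linear[OF continuous_components(2) xI_deriv, where c = xi3])
  fix s :: real assume "0 < s"
  have "0 \<le> beta1 * (xI s + etaC * xC s + etaA * xA s) * xS s"
    using bounds[of s] force_bounds[of s] beta1_pos \<open>0 < s\<close> by simp
  moreover have "0 < alpha * xA s + omega * xC s"
  proof -
    have "0 < xC s \<or> 0 < xA s" using assms(1) \<open>0 < s\<close> by blast
    then have "0 < omega * xC s \<or> 0 < alpha * xA s" using alpha_pos omega_pos by auto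
    moreover have "0 \<le> omega * xC s" "0 \<le> alpha * xA s"
      using bounds[of s] alpha_pos omega_pos \<open>0 < s\<close> by simp_all
    ultimately show ?thesis by linarith
  qed
  ultimately show "0 < fI (xS s) (xI s) (xC s) (xA s) + xi3 * xI s" by (simp add: fI_def)
qed (use assms init in simp_all)

lemma infected_pos:
  assumes "0 < xI 0 \<or> 0 < xC 0 \<or> 0 < xA 0" "0 < t"
  shows "0 < xI t" "0 < xC t" "0 < xA t"
proof -
  have "\<forall>s>0. 0 < xI s"
  proof (cases "0 < xI 0")
    case True
    then show ?thesis using I_pos_of_I0 by simp
  next
    case False
    then have "(\<forall>s>0. 0 < xC s) \<or> (\<forall>s>0. 0 < xA s)"
      using assms(1) C_pos_of_C0 A_pos_of_A0 by auto
    then show ?thesis using I_pos_of_CA by blast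
  qed
  then show "0 < xI t" "0 < xC t" "0 < xA t" using CA_pos_of_I assms(2) by auto
qed

lemma bounded_along_solution:
  fixes g :: "real \<Rightarrow> real \<Rightarrow> real \<Rightarrow> real \<Rightarrow> real \<Rightarrow> real"
  assumes "continuous_on UNIV
    (\<lambda>z. g (fst z) (fst (snd z)) (fst (snd (snd z))) (fst (snd (snd (snd z)))) (snd (snd (snd (snd z)))))"
  obtains M where "\<And>t. 0 \<le> t \<Longrightarrow> \<bar>g (xS t) (xI t) (xC t) (xA t) (xE t)\<bar> \<le> M"
proof -
  let ?g = "\<lambda>z. g (fst z) (fst (snd z)) (fst (snd (snd z))) (fst (snd (snd (snd z)))) (snd (snd (snd (snd z))))"
  have "compact state_box" by (simp add: state_box_def compact_Times)
  moreover have "continuous_on state_box ?g" using assms by (rule continuous_on_subset) simp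
  ultimately obtain M where M: "\<And>z. z \<in> state_box \<Longrightarrow> norm (?g z) \<le> M"
    using continuous_on_compact_bound by blast
  show ?thesis
  proof (rule that)
    fix t :: real assume "0 \<le> t"
    then have "norm (?g (x t)) \<le> M" using M x_in_state_box by blast
    then show "\<bar>g (xS t) (xI t) (xC t) (xA t) (xE t)\<bar> \<le> M"
      by (simp add: xS_def xI_def xC_def xA_def xE_def)
  qed
qed

lemma fS_along_deriv:
  assumes "0 < t"
  shows "((\<lambda>t. fS (xS t) (xI t) (xC t) (xA t)) has_real_derivative
    fS_deriv (xS t) (xI t) (xC t) (xA t)) (at t)"
proof -
  have eq: "(\<lambda>t. fS (xS t) (xI t) (xC t) (xA t))
    = (\<lambda>t. Lam - beta1 * (xI t + etaC * xC t + etaA * xA t) * xS t - (mu + psi) * xS t)"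
    by (simp add: fS_def fun_eq_iff)
  show ?thesis unfolding eq
    by (rule derivative_eq_intros xS_deriv[OF assms] xI_deriv[OF assms]
      xC_deriv[OF assms] xA_deriv[OF assms] refl)+ (simp add: fS_deriv_def algebra_simps)
qed

end

section \<open>The Lyapunov function\<close>

text \<open>The derivative of the Volterra part of the Lyapunov function, once the equilibrium relations
  have been used to eliminate \<open>Lam\<close>, \<open>xi1\<close>, \<open>xi2\<close> and \<open>xi3\<close>.\<close>

lemma lyapunov_identity:
  fixes S I C A Ss Is Cs As b eC eA al om m :: real
  assumes "0 < S" "0 < I" "0 < C" "0 < A" "0 < Ss" "0 < Is" "0 < Cs" "0 < As"
  shows "(1 - Ss/S) * (b*(Is+eC*Cs+eA*As)*Ss + m*Ss - b*(I+eC*C+eA*A)*S - m*S)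
    + (1 - Is/I) * (b*(I+eC*C+eA*A)*S - (b*(Is+eC*Cs+eA*As)*Ss + al*As + om*Cs)/Is * I + al*A + om*C)
    + (eC*b*Ss + om)*(1 - Cs/C)*(Cs*I/Is - C)
    + (eA*b*Ss + al)*(1 - As/A)*(As*I/Is - A)
    = - m*(S-Ss)^2/S - b*Is*(S-Ss)^2/S
      + eC*b*Ss*Cs*(3 - Ss/S - S*C*Is/(Ss*Cs*I) - I*Cs/(Is*C))
      + eA*b*Ss*As*(3 - Ss/S - S*A*Is/(Ss*As*I) - I*As/(Is*A))
      - om*(C*Is - Cs*I)^2/(Is*C*I) - al*(A*Is - As*I)^2/(Is*A*I)"
  using assms by (simp add: field_simps power2_eq_square)

context prep_endemic
begin

text \<open>The weights
  \<open>wC\<close> and \<open>wA\<close> are chosen so that the linear terms in \<open>C\<close> and \<open>A\<close> cancel in the derivative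
  along solutions; \<open>kE\<close> is small enough for the \<open>S\<close>-dissipation to absorb the coupling
  through \<open>psi\<close>.\<close>

definition "wC = (etaC * beta1 * Ss + omega) / xi2"
definition "wA = (etaA * beta1 * Ss + alpha) / xi1"
definition "kE = mu * mu / (2 * Nmax * (mu * mu + psi * psi))"

definition "lyap S I C A E = (S - Ss * ln S) + (I - Is * ln I) + wC * (C - Cs * ln C)
  + wA * (A - As * ln A) + kE * (E - Es)^2"
definition "lyap_deriv S I C A E = (1 - Ss / S) * fS S I C A + (1 - Is / I) * fI S I C A
  + wC * (1 - Cs / C) * fC I C + wA * (1 - As / A) * fA I A + 2 * kE * (E - Es) * fE S E"
definition "dissipation S I C A E = (S - Ss)^2 + (E - Es)^2 + (C * Is - Cs * I)^2 + (A * Is - As * I)^2"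
definition "dissipation_deriv S I C A E = 2 * (S - Ss) * fS S I C A + 2 * (E - Es) * fE S E
  + 2 * (C * Is - Cs * I) * (fC I C * Is - Cs * fI S I C A)
  + 2 * (A * Is - As * I) * (fA I A * Is - As * fI S I C A)"
definition "kappa = min (min ((mu + psi) / (2 * Nmax)) (kE * mu))
  (min (omega / (Is * Nmax^2)) (alpha / (Is * Nmax^2)))"

lemma wC_pos: "0 < wC" and wA_pos: "0 < wA" and kE_pos: "0 < kE" and kappa_pos: "0 < kappa"
proof -
  show "0 < wC" using etaC_pos beta1_pos Ss_pos omega_pos xi_pos by (simp add: wC_def add_pos_pos)
  show "0 < wA" using etaA_pos beta1_pos Ss_pos alpha_pos xi_pos by (simp add: wA_def add_pos_pos)
  show kE: "0 < kE" using mu_pos Nmax_pos by (simp add: kE_def add_pos_nonneg)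
  show "0 < kappa" using mu_pos psi_nonneg Nmax_pos kE omega_pos alpha_pos Is_pos by (simp add: kappa_def)
qed

lemma dissipation_nonneg: "0 \<le> dissipation S I C A E"
  by (simp add: dissipation_def)

lemma lyap_deriv_SICA_eq:
  assumes "0 < S" "0 < I" "0 < C" "0 < A"
  shows "(1 - Ss / S) * fS S I C A + (1 - Is / I) * fI S I C A + wC * (1 - Cs / C) * fC I C
      + wA * (1 - As / A) * fA I A
    = - (mu + psi)*(S-Ss)^2/S - beta1*Is*(S-Ss)^2/S
      + etaC*beta1*Ss*Cs*(3 - Ss/S - S*C*Is/(Ss*Cs*I) - I*Cs/(Is*C))
      + etaA*beta1*Ss*As*(3 - Ss/S - S*A*Is/(Ss*As*I) - I*As/(Is*A))
      - omega*(C*Is - Cs*I)^2/(Is*C*I) - alpha*(A*Is - As*I)^2/(Is*A*I)"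
proof -
  have eS: "fS S I C A = beta1*(Is+etaC*Cs+etaA*As)*Ss + (mu+psi)*Ss - beta1*(I+etaC*C+etaA*A)*S - (mu+psi)*S"
    using S_balance by (simp add: fS_def Ts_def)
  have "xi3 = (beta1*(Is+etaC*Cs+etaA*As)*Ss + alpha*As + omega*Cs)/Is"
    using I_balance Is_pos by (simp add: Ts_def field_simps)
  then have eI: "fI S I C A = beta1*(I+etaC*C+etaA*A)*S
      - (beta1*(Is+etaC*Cs+etaA*As)*Ss + alpha*As + omega*Cs)/Is * I + alpha*A + omega*C"
    by (simp add: fI_def)
  have "fC I C = xi2 * (Cs*I/Is - C)"
    using C_balance Is_pos by (simp add: fC_def field_simps)
  then have eC: "wC * (1 - Cs / C) * fC I C = (etaC*beta1*Ss + omega)*(1 - Cs/C)*(Cs*I/Is - C)"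
    using xi_pos by (simp add: wC_def)
  have "fA I A = xi1 * (As*I/Is - A)"
    using A_balance Is_pos by (simp add: fA_def field_simps)
  then have eA: "wA * (1 - As / A) * fA I A = (etaA*beta1*Ss + alpha)*(1 - As/A)*(As*I/Is - A)"
    using xi_pos by (simp add: wA_def)
  show ?thesis unfolding eS eI eC eA
    by (rule lyapunov_identity[OF assms Ss_pos Is_pos Cs_pos As_pos])
qed

lemma AM_GM_term_nonpos:
  assumes "0 < S" "0 < I" "0 < X" "0 < Xs" "0 \<le> c"
  shows "c * (3 - Ss/S - S*X*Is/(Ss*Xs*I) - I*Xs/(Is*X)) \<le> 0"
proof -
  have "3 \<le> Ss/S + S*X*Is/(Ss*Xs*I) + I*Xs/(Is*X)"
    by (rule three_le_sum_if_prod_one) (use assms Ss_pos Is_pos in \<open>simp_all add: field_simps\<close>)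
  then show ?thesis using assms(5) by (simp add: mult_nonneg_nonpos)
qed

lemma E_term_le:
  "2 * kE * (E - Es) * fE S E \<le> (mu + psi) / (2 * Nmax) * (S - Ss)^2 - kE * mu * (E - Es)^2"
proof -
  let ?u = "S - Ss" and ?v = "E - Es"
  have cross: "2 * psi * ?u * ?v \<le> psi^2 * ?u^2 / mu + mu * ?v^2"
  proof -
    have "0 \<le> (psi * ?u - mu * ?v)^2 / mu" using mu_pos by simp
    also have "(psi * ?u - mu * ?v)^2 / mu = psi^2 * ?u^2 / mu + mu * ?v^2 - 2 * psi * ?u * ?v"
      using mu_pos by (simp add: field_simps power2_eq_square)
    finally show ?thesis by simp
  qed
  have fE: "fE S E = psi * ?u - mu * ?v" using E_balance by (simp add: fE_def algebra_simps)
  have "2 * kE * ?v * fE S E = kE * (2 * psi * ?u * ?v) - 2 * kE * mu * ?v^2"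
    unfolding fE by (simp add: algebra_simps power2_eq_square)
  also have "\<dots> \<le> kE * (psi^2 * ?u^2 / mu + mu * ?v^2) - 2 * kE * mu * ?v^2"
    using cross kE_pos by (simp add: mult_left_mono)
  also have "\<dots> = kE * psi^2 / mu * ?u^2 - kE * mu * ?v^2" by (simp add: algebra_simps)
  finally have "2 * kE * ?v * fE S E \<le> kE * psi^2 / mu * ?u^2 - kE * mu * ?v^2" .
  moreover have "kE * psi^2 / mu \<le> (mu + psi) / (2 * Nmax)"
  proof -
    define D where "D = mu * mu + psi * psi"
    have D: "0 < D" "psi^2 \<le> D" using mu_pos by (simp_all add: D_def add_pos_nonneg power2_eq_square)
    have "kE * psi^2 / mu = mu / (2 * Nmax) * (psi^2 / D)"
      using mu_pos Nmax_pos D by (simp add: kE_def D_def[symmetric] field_simps)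
    also have "\<dots> \<le> mu / (2 * Nmax) * 1"
      using mu_pos Nmax_pos D by (intro mult_left_mono) simp_all
    also have "\<dots> \<le> (mu + psi) / (2 * Nmax)" using psi_nonneg Nmax_pos by (simp add: divide_right_mono)
    finally show ?thesis .
  qed
  then have "kE * psi^2 / mu * ?u^2 \<le> (mu + psi) / (2 * Nmax) * ?u^2" by (rule mult_right_mono) simp
  ultimately show ?thesis by linarith
qed

lemma lyap_deriv_le:
  assumes S: "0 < S" "S \<le> Nmax" and I: "0 < I" "I \<le> Nmax" and C: "0 < C" "C \<le> Nmax"
    and A: "0 < A" "A \<le> Nmax"
  shows "lyap_deriv S I C A E \<le> - kappa * dissipation S I C A E"
proof -
  let ?u = "S - Ss" and ?v = "E - Es" and ?X = "C * Is - Cs * I" and ?Y = "A * Is - As * I"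
  have "etaC*beta1*Ss*Cs*(3 - Ss/S - S*C*Is/(Ss*Cs*I) - I*Cs/(Is*C)) \<le> 0"
    by (rule AM_GM_term_nonpos) (use S I C Cs_pos etaC_pos beta1_pos Ss_pos in simp_all)
  moreover have "etaA*beta1*Ss*As*(3 - Ss/S - S*A*Is/(Ss*As*I) - I*As/(Is*A)) \<le> 0"
    by (rule AM_GM_term_nonpos) (use S I A As_pos etaA_pos beta1_pos Ss_pos in simp_all)
  moreover have "(mu + psi) * ?u^2 / Nmax \<le> (mu + psi) * ?u^2 / S"
    using S mu_pos psi_nonneg by (intro divide_left_mono) simp_all
  moreover have "0 \<le> beta1 * Is * ?u^2 / S" using beta1_pos Is_pos S by simp
  moreover have "omega * ?X^2 / (Is * Nmax^2) \<le> omega * ?X^2 / (Is * C * I)"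
    using Is_pos C I omega_pos mult_mono[of C Nmax I Nmax]
    by (intro divide_left_mono) (simp_all add: power2_eq_square)
  moreover have "alpha * ?Y^2 / (Is * Nmax^2) \<le> alpha * ?Y^2 / (Is * A * I)"
    using Is_pos A I alpha_pos mult_mono[of A Nmax I Nmax]
    by (intro divide_left_mono) (simp_all add: power2_eq_square)
  moreover note E_term_le[of E S]
  moreover have "lyap_deriv S I C A E = - (mu + psi)*?u^2/S - beta1*Is*?u^2/S
      + etaC*beta1*Ss*Cs*(3 - Ss/S - S*C*Is/(Ss*Cs*I) - I*Cs/(Is*C))
      + etaA*beta1*Ss*As*(3 - Ss/S - S*A*Is/(Ss*As*I) - I*As/(Is*A))
      - omega*?X^2/(Is*C*I) - alpha*?Y^2/(Is*A*I) + 2 * kE * ?v * fE S E"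
    unfolding lyap_deriv_def lyap_deriv_SICA_eq[OF S(1) I(1) C(1) A(1), symmetric] by simp
  moreover have "(mu + psi) * ?u^2 / Nmax = 2 * ((mu + psi) / (2 * Nmax) * ?u^2)"
    "omega * ?X^2 / (Is * Nmax^2) = (omega / (Is * Nmax^2)) * ?X^2"
    "alpha * ?Y^2 / (Is * Nmax^2) = (alpha / (Is * Nmax^2)) * ?Y^2"
    by simp_all
  ultimately have main: "lyap_deriv S I C A E \<le> - ((mu + psi) / (2 * Nmax)) * ?u^2 - (kE * mu) * ?v^2
      - (omega / (Is * Nmax^2)) * ?X^2 - (alpha / (Is * Nmax^2)) * ?Y^2"
    by linarith
  have "kappa * ?u^2 \<le> (mu + psi) / (2 * Nmax) * ?u^2" "kappa * ?v^2 \<le> (kE * mu) * ?v^2"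
    "kappa * ?X^2 \<le> (omega / (Is * Nmax^2)) * ?X^2" "kappa * ?Y^2 \<le> (alpha / (Is * Nmax^2)) * ?Y^2"
    by (intro mult_right_mono; simp add: kappa_def)+
  with main show ?thesis by (simp add: dissipation_def algebra_simps)
qed

lemma lyap_excess_eq:
  assumes "0 < S" "0 < I" "0 < C" "0 < A"
  shows "lyap S I C A E - lyap Ss Is Cs As Es = Ss * volterra (S / Ss) + Is * volterra (I / Is)
    + wC * (Cs * volterra (C / Cs)) + wA * (As * volterra (A / As)) + kE * (E - Es)^2"
proof -
  have "lyap S I C A E - lyap Ss Is Cs As Es = ((S - Ss * ln S) - (Ss - Ss * ln Ss))
      + ((I - Is * ln I) - (Is - Is * ln Is)) + wC * ((C - Cs * ln C) - (Cs - Cs * ln Cs))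
      + wA * ((A - As * ln A) - (As - As * ln As)) + kE * (E - Es)^2"
    by (simp add: lyap_def algebra_simps)
  then show ?thesis using assms Ss_pos Is_pos Cs_pos As_pos by (simp add: volterra_scaled_eq)
qed

lemma lyap_ge_endemic:
  assumes "0 < S" "0 < I" "0 < C" "0 < A"
  shows "lyap Ss Is Cs As Es \<le> lyap S I C A E"
proof -
  have "0 \<le> Ss * volterra (S / Ss)" "0 \<le> Is * volterra (I / Is)" "0 \<le> wC * (Cs * volterra (C / Cs))"
    "0 \<le> wA * (As * volterra (A / As))" "0 \<le> kE * (E - Es)^2"
    using assms Ss_pos Is_pos Cs_pos As_pos wC_pos wA_pos kE_pos volterra_nonneg by simp_all
  then show ?thesis using lyap_excess_eq[OF assms, of E] by linarith
qed

definition "lyap_lower = min (min 1 (min wC wA) / (2 * Nmax)) kE"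
definition "lyap_upper = max (max (2 / Ss) (2 / Is)) (max (max (2 * wC / Cs) (2 * wA / As)) kE)"

lemma lyap_lower_pos: "0 < lyap_lower" and lyap_upper_pos: "0 < lyap_upper"
  using wC_pos wA_pos kE_pos Nmax_pos Ss_pos
  by (simp_all add: lyap_lower_def lyap_upper_def less_max_iff_disj)

lemma lyap_excess_ge:
  assumes "0 < S" "S \<le> Nmax" "0 < I" "I \<le> Nmax" "0 < C" "C \<le> Nmax" "0 < A" "A \<le> Nmax"
  shows "lyap_lower * ((S - Ss)^2 + (I - Is)^2 + (C - Cs)^2 + (A - As)^2 + (E - Es)^2)
    \<le> lyap S I C A E - lyap Ss Is Cs As Es"
proof -
  have le: "lyap_lower \<le> 1 / (2 * Nmax)" "lyap_lower \<le> wC / (2 * Nmax)" "lyap_lower \<le> wA / (2 * Nmax)"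
    "lyap_lower \<le> kE"
    using Nmax_pos by (auto simp: lyap_lower_def min_le_iff_disj intro: divide_right_mono)
  have "lyap_lower * (S - Ss)^2 \<le> 1 * (Ss * volterra (S / Ss))"
    by (rule weighted_volterra_ge) (use assms Ss_pos endemic_le_Nmax le in simp_all)
  moreover have "lyap_lower * (I - Is)^2 \<le> 1 * (Is * volterra (I / Is))"
    by (rule weighted_volterra_ge) (use assms Is_pos endemic_le_Nmax le in simp_all)
  moreover have "lyap_lower * (C - Cs)^2 \<le> wC * (Cs * volterra (C / Cs))"
    by (rule weighted_volterra_ge) (use assms Cs_pos endemic_le_Nmax le wC_pos in simp_all)
  moreover have "lyap_lower * (A - As)^2 \<le> wA * (As * volterra (A / As))"
    by (rule weighted_volterra_ge) (use assms As_pos endemic_le_Nmax le wA_pos in simp_all)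
  moreover have "lyap_lower * (E - Es)^2 \<le> kE * (E - Es)^2" using le(4) by (rule mult_right_mono) simp
  ultimately show ?thesis using lyap_excess_eq[of S I C A E] assms by (simp add: algebra_simps)
qed

lemma lyap_excess_le:
  assumes "Ss / 2 \<le> S" "Is / 2 \<le> I" "Cs / 2 \<le> C" "As / 2 \<le> A"
  shows "lyap S I C A E - lyap Ss Is Cs As Es
    \<le> lyap_upper * ((S - Ss)^2 + (I - Is)^2 + (C - Cs)^2 + (A - As)^2 + (E - Es)^2)"
proof -
  have le: "2 * 1 / Ss \<le> lyap_upper" "2 * 1 / Is \<le> lyap_upper" "2 * wC / Cs \<le> lyap_upper"
    "2 * wA / As \<le> lyap_upper" "kE \<le> lyap_upper"
    by (simp_all add: lyap_upper_def le_max_iff_disj)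
  have pos: "0 < S" "0 < I" "0 < C" "0 < A" using assms Ss_pos Is_pos Cs_pos As_pos by linarith+
  have "1 * (Ss * volterra (S / Ss)) \<le> lyap_upper * (S - Ss)^2"
    by (rule weighted_volterra_le) (use assms Ss_pos le in simp_all)
  moreover have "1 * (Is * volterra (I / Is)) \<le> lyap_upper * (I - Is)^2"
    by (rule weighted_volterra_le) (use assms Is_pos le in simp_all)
  moreover have "wC * (Cs * volterra (C / Cs)) \<le> lyap_upper * (C - Cs)^2"
    by (rule weighted_volterra_le) (use assms Cs_pos le wC_pos in simp_all)
  moreover have "wA * (As * volterra (A / As)) \<le> lyap_upper * (A - As)^2"
    by (rule weighted_volterra_le) (use assms As_pos le wA_pos in simp_all)
  moreover have "kE * (E - Es)^2 \<le> lyap_upper * (E - Es)^2" using le(5) by (rule mult_right_mono) simp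
  ultimately show ?thesis using lyap_excess_eq[OF pos, of E] by (simp add: algebra_simps)
qed

end

locale prep_endemic_solution = prep_endemic + prep_solution
begin

lemma lyap_along_deriv:
  assumes "0 < t" "0 < xS t" "0 < xI t" "0 < xC t" "0 < xA t"
  shows "((\<lambda>t. lyap (xS t) (xI t) (xC t) (xA t) (xE t)) has_real_derivative
    lyap_deriv (xS t) (xI t) (xC t) (xA t) (xE t)) (at t)"
proof -
  have "((\<lambda>t. (xE t - Es)^2) has_real_derivative 2 * (xE t - Es) * fE (xS t) (xE t)) (at t)"
    by (rule derivative_eq_intros xE_deriv[OF assms(1)] refl)+ (simp add: algebra_simps)
  then have "((\<lambda>t. (xS t - Ss * ln (xS t)) + (xI t - Is * ln (xI t)) + wC * (xC t - Cs * ln (xC t))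
      + wA * (xA t - As * ln (xA t)) + kE * (xE t - Es)^2) has_real_derivative
    (1 - Ss / xS t) * fS (xS t) (xI t) (xC t) (xA t) + (1 - Is / xI t) * fI (xS t) (xI t) (xC t) (xA t)
      + wC * ((1 - Cs / xC t) * fC (xI t) (xC t)) + wA * ((1 - As / xA t) * fA (xI t) (xA t))
      + kE * (2 * (xE t - Es) * fE (xS t) (xE t))) (at t)"
    by (intro DERIV_add DERIV_cmult DERIV_volterra_term xS_deriv xI_deriv xC_deriv xA_deriv assms)
  then show ?thesis by (simp add: lyap_def[abs_def] lyap_deriv_def algebra_simps)
qed

lemma dissipation_along_deriv:
  assumes "0 < t"
  shows "((\<lambda>t. dissipation (xS t) (xI t) (xC t) (xA t) (xE t)) has_real_derivative
    dissipation_deriv (xS t) (xI t) (xC t) (xA t) (xE t)) (at t)"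
  unfolding dissipation_def[abs_def]
  by (rule derivative_eq_intros xS_deriv[OF assms] xI_deriv[OF assms] xC_deriv[OF assms]
      xA_deriv[OF assms] xE_deriv[OF assms] refl)+ (simp add: dissipation_deriv_def algebra_simps)

lemma lyap_nonincreasing:
  assumes pos0: "0 < xS 0" "0 < xI 0" "0 < xC 0" "0 < xA 0" and "0 \<le> t"
  shows "lyap (xS t) (xI t) (xC t) (xA t) (xE t) \<le> lyap (xS 0) (xI 0) (xC 0) (xA 0) (xE 0)"
proof -
  have pos: "0 < xS s \<and> 0 < xI s \<and> 0 < xC s \<and> 0 < xA s" if "0 \<le> s" for s
  proof (cases "s = 0")
    case False
    then show ?thesis using that S_pos infected_pos[of s] pos0 by auto
  qed (use pos0 in simp)
  show ?thesis
  proof (rule DERIV_nonpos_imp_decreasing_open[OF \<open>0 \<le> t\<close>])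
    fix s :: real assume s: "0 < s" "s < t"
    then have p: "0 < xS s" "0 < xI s" "0 < xC s" "0 < xA s" using pos[of s] by auto
    have "lyap_deriv (xS s) (xI s) (xC s) (xA s) (xE s) \<le> - kappa * dissipation (xS s) (xI s) (xC s) (xA s) (xE s)"
      using lyap_deriv_le[OF p(1) _ p(2) _ p(3) _ p(4)] bounds[of s] s by simp
    also have "\<dots> \<le> 0" using kappa_pos dissipation_nonneg by (simp add: mult_nonneg_nonneg)
    finally show "\<exists>y. ((\<lambda>t. lyap (xS t) (xI t) (xC t) (xA t) (xE t)) has_real_derivative y) (at s) \<and> y \<le> 0"
      using lyap_along_deriv[OF s(1) p] by blast
  next
    have "continuous_on {0..t} xS" "continuous_on {0..t} xI" "continuous_on {0..t} xC"
      "continuous_on {0..t} xA" "continuous_on {0..t} xE"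
      using continuous_components by (auto elim: continuous_on_subset)
    moreover have "\<forall>s\<in>{0..t}. xS s \<noteq> 0 \<and> xI s \<noteq> 0 \<and> xC s \<noteq> 0 \<and> xA s \<noteq> 0"
      using pos by force
    ultimately show "continuous_on {0..t} (\<lambda>t. lyap (xS t) (xI t) (xC t) (xA t) (xE t))"
      unfolding lyap_def by (intro continuous_intros) auto
  qed
qed

end

section \<open>Convergence of infected solutions\<close>

locale prep_infected_solution = prep_endemic_solution +
  assumes infected_init: "0 < xI 0 \<or> 0 < xC 0 \<or> 0 < xA 0"
begin

lemma SICA_pos: "0 < t \<Longrightarrow> 0 < xS t \<and> 0 < xI t \<and> 0 < xC t \<and> 0 < xA t"
  using S_pos infected_pos[OF infected_init] by blast

lemma dissipation_tendsto_zero: "((\<lambda>t. dissipation (xS t) (xI t) (xC t) (xA t) (xE t)) \<longlongrightarrow> 0) at_top"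
proof -
  have "continuous_on UNIV (\<lambda>z. dissipation_deriv (fst z) (fst (snd z)) (fst (snd (snd z)))
      (fst (snd (snd (snd z)))) (snd (snd (snd (snd z)))))"
    unfolding dissipation_deriv_def fS_def fI_def fC_def fA_def fE_def by (intro continuous_intros)
  then obtain M where M: "\<And>t. 0 \<le> t \<Longrightarrow> \<bar>dissipation_deriv (xS t) (xI t) (xC t) (xA t) (xE t)\<bar> \<le> M"
    using bounded_along_solution by blast
  let ?F = "\<lambda>t. dissipation (xS t) (xI t) (xC t) (xA t) (xE t)"
  have "((\<lambda>t. kappa * ?F t) \<longlongrightarrow> 0) at_top"
  proof (rule tendsto_zero_of_dissipation[where a = 1 and L = "lyap Ss Is Cs As Es"])
    fix t :: real assume "1 \<le> t"
    then have t: "0 < t" and pos: "0 < xS t" "0 < xI t" "0 < xC t" "0 < xA t" using SICA_pos[of t] by auto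
    show "((\<lambda>t. lyap (xS t) (xI t) (xC t) (xA t) (xE t)) has_real_derivative
        lyap_deriv (xS t) (xI t) (xC t) (xA t) (xE t)) (at t)"
      by (rule lyap_along_deriv[OF t pos])
    show "lyap_deriv (xS t) (xI t) (xC t) (xA t) (xE t) \<le> - (kappa * ?F t)"
      using lyap_deriv_le[OF pos(1) _ pos(2) _ pos(3) _ pos(4)] bounds[of t] t by simp
    show "0 \<le> kappa * ?F t" using kappa_pos dissipation_nonneg by simp
    show "((\<lambda>t. kappa * ?F t) has_real_derivative kappa * dissipation_deriv (xS t) (xI t) (xC t) (xA t) (xE t)) (at t)"
      by (rule DERIV_cmult[OF dissipation_along_deriv[OF t]])
    show "\<bar>kappa * dissipation_deriv (xS t) (xI t) (xC t) (xA t) (xE t)\<bar> \<le> kappa * M"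
      using M[of t] t kappa_pos by (simp add: abs_mult)
    show "lyap Ss Is Cs As Es \<le> lyap (xS t) (xI t) (xC t) (xA t) (xE t)"
      by (rule lyap_ge_endemic[OF pos])
  qed
  then have "((\<lambda>t. (1 / kappa) * (kappa * ?F t)) \<longlongrightarrow> (1 / kappa) * 0) at_top"
    by (rule tendsto_mult_left)
  then show ?thesis using kappa_pos by simp
qed

lemma dissipation_terms_tendsto_zero:
  "((\<lambda>t. xS t - Ss) \<longlongrightarrow> 0) at_top" "((\<lambda>t. xE t - Es) \<longlongrightarrow> 0) at_top"
  "((\<lambda>t. xC t * Is - Cs * xI t) \<longlongrightarrow> 0) at_top" "((\<lambda>t. xA t * Is - As * xI t) \<longlongrightarrow> 0) at_top"
  by (rule tendsto_zero_if_square_le[OF dissipation_tendsto_zero],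
      intro always_eventually allI, simp add: dissipation_def)+

lemma S_tendsto: "(xS \<longlongrightarrow> Ss) at_top"
  using tendsto_add_const_iff[of Ss "\<lambda>t. xS t - Ss" 0] dissipation_terms_tendsto_zero(1) by simp

lemma E_tendsto: "(xE \<longlongrightarrow> Es) at_top"
  using tendsto_add_const_iff[of Es "\<lambda>t. xE t - Es" 0] dissipation_terms_tendsto_zero(2) by simp

text \<open>Barbalat's lemma once more, now for \<open>S\<close> itself: \<open>S\<close> converges and \<open>S''\<close> is bounded, so
  \<open>S' \<longrightarrow> 0\<close>; this identifies the limit of the force of infection.\<close>

lemma fS_tendsto_zero: "((\<lambda>t. fS (xS t) (xI t) (xC t) (xA t)) \<longlongrightarrow> 0) at_top"
proof -
  have "continuous_on UNIV (\<lambda>z. fS_deriv (fst z) (fst (snd z)) (fst (snd (snd z))) (fst (snd (snd (snd z)))))"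
    unfolding fS_deriv_def fS_def fI_def fC_def fA_def by (intro continuous_intros)
  then obtain M where M: "\<And>t. 0 \<le> t \<Longrightarrow> \<bar>fS_deriv (xS t) (xI t) (xC t) (xA t)\<bar> \<le> M"
    using bounded_along_solution[where g = "\<lambda>S I C A E. fS_deriv S I C A"] by blast
  show ?thesis
  proof (rule barbalat[where a = 1 and g = xS and L = Ss])
    fix t :: real assume "1 \<le> t"
    then show "(xS has_real_derivative fS (xS t) (xI t) (xC t) (xA t)) (at t)"
      "((\<lambda>t. fS (xS t) (xI t) (xC t) (xA t)) has_real_derivative fS_deriv (xS t) (xI t) (xC t) (xA t)) (at t)"
      "\<bar>fS_deriv (xS t) (xI t) (xC t) (xA t)\<bar> \<le> M"
      using xS_deriv[of t] fS_along_deriv[of t] M[of t] by simp_all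
  qed (rule S_tendsto)
qed

lemma force_tendsto: "((\<lambda>t. xI t + etaC * xC t + etaA * xA t) \<longlongrightarrow> Ts) at_top"
proof (rule Lim_transform_eventually)
  have "((\<lambda>t. (Lam - (mu + psi) * xS t - fS (xS t) (xI t) (xC t) (xA t)) / (beta1 * xS t))
      \<longlongrightarrow> (Lam - (mu + psi) * Ss - 0) / (beta1 * Ss)) at_top"
    using beta1_pos Ss_pos by (intro tendsto_intros S_tendsto fS_tendsto_zero) simp
  moreover have "(Lam - (mu + psi) * Ss - 0) / (beta1 * Ss) = Ts"
    using S_balance beta1_pos Ss_pos by (simp add: field_simps)
  ultimately show "((\<lambda>t. (Lam - (mu + psi) * xS t - fS (xS t) (xI t) (xC t) (xA t)) / (beta1 * xS t))
      \<longlongrightarrow> Ts) at_top" by simp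
  have "(Lam - (mu + psi) * xS t - fS (xS t) (xI t) (xC t) (xA t)) / (beta1 * xS t)
      = xI t + etaC * xC t + etaA * xA t" if "1 \<le> t" for t
    using SICA_pos[of t] that beta1_pos by (simp add: fS_def)
  then show "\<forall>\<^sub>F t in at_top. (Lam - (mu + psi) * xS t - fS (xS t) (xI t) (xC t) (xA t)) / (beta1 * xS t)
      = xI t + etaC * xC t + etaA * xA t"
    unfolding eventually_at_top_linorder by blast
qed

lemma I_tendsto: "(xI \<longlongrightarrow> Is) at_top"
proof -
  have "((\<lambda>t. (Is * (xI t + etaC * xC t + etaA * xA t) - etaC * (xC t * Is - Cs * xI t)
      - etaA * (xA t * Is - As * xI t)) / Ts) \<longlongrightarrow> (Is * Ts - etaC * 0 - etaA * 0) / Ts) at_top"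
    using Ts_pos by (intro tendsto_intros force_tendsto dissipation_terms_tendsto_zero) simp
  moreover have "(Is * (xI t + etaC * xC t + etaA * xA t) - etaC * (xC t * Is - Cs * xI t)
      - etaA * (xA t * Is - As * xI t)) / Ts = xI t" for t
    using Ts_pos by (simp add: Ts_def field_simps)
  ultimately show ?thesis using Ts_pos by simp
qed

lemma C_tendsto: "(xC \<longlongrightarrow> Cs) at_top"
proof -
  have "((\<lambda>t. ((xC t * Is - Cs * xI t) + Cs * xI t) / Is) \<longlongrightarrow> (0 + Cs * Is) / Is) at_top"
    using Is_pos by (intro tendsto_intros dissipation_terms_tendsto_zero I_tendsto) simp
  then show ?thesis using Is_pos by simp
qed

lemma A_tendsto: "(xA \<longlongrightarrow> As) at_top"
proof -
  have "((\<lambda>t. ((xA t * Is - As * xI t) + As * xI t) / Is) \<longlongrightarrow> (0 + As * Is) / Is) at_top"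
    using Is_pos by (intro tendsto_intros dissipation_terms_tendsto_zero I_tendsto) simp
  then show ?thesis using Is_pos by simp
qed

lemma tendsto_endemic: "(x \<longlongrightarrow> endemic) at_top"
proof -
  have "((\<lambda>t. (xS t, xI t, xC t, xA t, xE t)) \<longlongrightarrow> (Ss, Is, Cs, As, Es)) at_top"
    by (intro tendsto_Pair S_tendsto I_tendsto C_tendsto A_tendsto E_tendsto)
  moreover have "(\<lambda>t. (xS t, xI t, xC t, xA t, xE t)) = x" by (simp add: fun_eq_iff x_eq[symmetric])
  ultimately show ?thesis by (simp add: endemic_def)
qed

end

section \<open>Global asymptotic stability\<close>

context prep_endemic_solution
begin

lemma dist_endemic_bound:
  assumes near: "Ss / 2 \<le> xS 0" "Is / 2 \<le> xI 0" "Cs / 2 \<le> xC 0" "As / 2 \<le> xA 0" and "0 \<le> t"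
  shows "lyap_lower * (dist (x t) endemic)^2 \<le> lyap_upper * (dist (x 0) endemic)^2"
proof -
  have pos0: "0 < xS 0" "0 < xI 0" "0 < xC 0" "0 < xA 0"
    using near Ss_pos Is_pos Cs_pos As_pos by linarith+
  have pos: "0 < xS t" "0 < xI t" "0 < xC t" "0 < xA t"
    using \<open>0 \<le> t\<close> pos0 S_pos[of t] infected_pos[of t] by (cases "t = 0"; auto)+
  have dist_sq: "(dist (x s) endemic)^2 = (xS s - Ss)^2 + (xI s - Is)^2 + (xC s - Cs)^2 + (xA s - As)^2
      + (xE s - Es)^2" for s
    unfolding endemic_def by (subst x_eq) (rule dist_state_sq)
  have "lyap_lower * (dist (x t) endemic)^2
      \<le> lyap (xS t) (xI t) (xC t) (xA t) (xE t) - lyap Ss Is Cs As Es"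
    unfolding dist_sq using bounds[OF \<open>0 \<le> t\<close>] pos by (intro lyap_excess_ge) auto
  also have "\<dots> \<le> lyap (xS 0) (xI 0) (xC 0) (xA 0) (xE 0) - lyap Ss Is Cs As Es"
    using lyap_nonincreasing[OF pos0 \<open>0 \<le> t\<close>] by simp
  also have "\<dots> \<le> lyap_upper * (dist (x 0) endemic)^2"
    unfolding dist_sq by (rule lyap_excess_le[OF near])
  finally show ?thesis .
qed

end

context prep_endemic
begin

lemma solution_intro:
  "is_solution rhs x \<Longrightarrow> x 0 \<in> OmegaP Lam mu psi \<Longrightarrow>
    prep_endemic_solution Lam mu beta rho phi alpha omega psi etaC etaA x"
  by (intro prep_endemic_solution.intro prep_endemic_axioms prep_solution.intro prep_model_axioms)
    (simp add: prep_solution_axioms_def)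

lemma endemic_stable:
  assumes "0 < \<epsilon>"
  shows "\<exists>\<delta>>0. \<forall>x. is_solution rhs x \<and> x 0 \<in> OmegaP Lam mu psi \<and> dist (x 0) endemic < \<delta>
    \<longrightarrow> (\<forall>t\<ge>0. dist (x t) endemic < \<epsilon>)"
proof -
  define h where "h = min (min Ss Is) (min Cs As) / 2"
  define r where "r = sqrt (lyap_lower / lyap_upper)"
  have h: "0 < h" "h \<le> Ss / 2" "h \<le> Is / 2" "h \<le> Cs / 2" "h \<le> As / 2"
    using Ss_pos Is_pos Cs_pos As_pos by (auto simp: h_def min_le_iff_disj)
  have r: "0 < r" "lyap_upper * r^2 = lyap_lower"
    using lyap_lower_pos lyap_upper_pos by (simp_all add: r_def)
  have "0 < min h (\<epsilon> * r)" using h r assms by simp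
  moreover have "dist (x t) endemic < \<epsilon>"
    if sol: "is_solution rhs x" "x 0 \<in> OmegaP Lam mu psi" and near: "dist (x 0) endemic < min h (\<epsilon> * r)"
      and "0 \<le> t" for x t
  proof -
    interpret s: prep_endemic_solution Lam mu beta rho phi alpha omega psi etaC etaA x
      using solution_intro[OF sol] .
    let ?D = "dist (x 0) endemic"
    have "\<bar>s.xS 0 - Ss\<bar> \<le> ?D" "\<bar>s.xI 0 - Is\<bar> \<le> ?D" "\<bar>s.xC 0 - Cs\<bar> \<le> ?D" "\<bar>s.xA 0 - As\<bar> \<le> ?D"
      unfolding endemic_def by (subst s.x_eq, rule abs_le_dist_state)+
    then have "Ss / 2 \<le> s.xS 0" "Is / 2 \<le> s.xI 0" "Cs / 2 \<le> s.xC 0" "As / 2 \<le> s.xA 0"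
      using near h by (simp_all add: abs_le_iff)
    then have "lyap_lower * (dist (x t) endemic)^2 \<le> lyap_upper * ?D^2"
      by (rule s.dist_endemic_bound) fact
    also have "\<dots> < lyap_upper * (\<epsilon> * r)^2"
      using near lyap_upper_pos by (intro mult_strict_left_mono power_strict_mono) auto
    also have "\<dots> = lyap_lower * \<epsilon>^2" using r(2) by (simp add: power_mult_distrib algebra_simps)
    finally have "(dist (x t) endemic)^2 < \<epsilon>^2" using lyap_lower_pos by simp
    then show ?thesis using assms by (simp add: power2_less_imp_less)
  qed
  ultimately show ?thesis by blast
qed

lemma endemic_attractive:
  assumes "is_solution rhs x" "x 0 \<in> OmegaP Lam mu psi - OmegaP0 Lam mu psi"
  shows "(x \<longlongrightarrow> endemic) at_top"
proof -
  interpret s: prep_endemic_solution Lam mu beta rho phi alpha omega psi etaC etaA x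
    using solution_intro assms by simp
  have "\<not> (s.xI 0 = 0 \<and> s.xC 0 = 0 \<and> s.xA 0 = 0)"
    using assms(2) unfolding OmegaP0_def by (subst (asm) s.x_eq) auto
  then have "0 < s.xI 0 \<or> 0 < s.xC 0 \<or> 0 < s.xA 0" using s.init by linarith
  then interpret i: prep_infected_solution Lam mu beta rho phi alpha omega psi etaC etaA x
    by unfold_locales
  show ?thesis by (rule i.tendsto_endemic)
qed

lemma endemic_gas: "gas_in rhs endemic (OmegaP Lam mu psi - OmegaP0 Lam mu psi)"
  unfolding gas_in_def using endemic_is_equilibrium endemic_stable endemic_attractive by blast

end

theorem mainTheorem4:
  fixes Lam mu beta rho phi alpha omega psi etaC etaA :: real
  assumes "Lam > 0" "mu > 0" "beta > 0" "rho > 0" "phi > 0" "alpha > 0" "omega > 0"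
    and "psi \<ge> 0" and "0 < etaC" "etaC \<le> 1" and "etaA \<ge> 1"
    and "R0 Lam mu beta rho phi alpha omega psi etaC etaA > 1"
  shows "(\<exists>!p. hiv_rhs Lam mu beta rho phi alpha omega psi etaC etaA p = 0 \<and>
              fst (snd p) > 0 \<and> fst (snd (snd p)) > 0 \<and> fst (snd (snd (snd p))) > 0) \<and>
         (\<forall>p. hiv_rhs Lam mu beta rho phi alpha omega psi etaC etaA p = 0 \<and>
              fst (snd p) > 0 \<and> fst (snd (snd p)) > 0 \<and> fst (snd (snd (snd p))) > 0 \<longrightarrow>
           (let beta1 = beta * mu / Lam; xi1 = alpha + mu; xi2 = omega + mu;
                St = mu * (xi1 * (phi + xi2) + rho * xi2)
                     / (beta1 * (xi1 * (xi2 + etaC * phi) + etaA * rho * xi2))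
            in fst p = St \<and> snd (snd (snd (snd p))) = psi * St / mu \<and>
               gas_in (hiv_rhs Lam mu beta rho phi alpha omega psi etaC etaA) p
                 (OmegaP Lam mu psi - OmegaP0 Lam mu psi)))"
proof -
  interpret prep_endemic Lam mu beta rho phi alpha omega psi etaC etaA
    by unfold_locales (use assms in auto)
  have endemic_iff: "rhs p = 0 \<and> 0 < fst (snd p) \<and> 0 < fst (snd (snd p)) \<and> 0 < fst (snd (snd (snd p)))
      \<longleftrightarrow> p = endemic" for p
    using endemic_unique[of "fst p"] endemic_is_equilibrium Is_pos Cs_pos As_pos
    by (cases p) (auto simp: endemic_def)
  have Ss_eq: "Ss = mu * ((alpha + mu) * (phi + (omega + mu)) + rho * (omega + mu))
      / (beta * mu / Lam * ((alpha + mu) * ((omega + mu) + etaC * phi) + etaA * rho * (omega + mu)))"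
    by (simp add: Ss_def NN_def DD_def beta1_def xi1_def xi2_def)
  show ?thesis
    unfolding endemic_iff using endemic_gas by (simp add: endemic_def Es_def Ss_eq Let_def)
qed

end
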